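(* Assume $\mathcal E$ is stable under pullback, $\mathcal N=\mathcal M\cap\operatorname{mor}\mathcal A$, and $\mathcal A$ is $\mathcal E$-reflective in $\mathcal X$ (i.e. $\rho_X\in\mathcal E$ for every $X\in\mathcal X$). Let $c$ be a closure operator on $\mathcal A$ and let $X\in\mathcal X$. If $R$ preserves products with $X$ (i.e. $\rho_{X\times Y}=\rho_X\times\rho_Y$ for every $Y\in\mathcal X$), then $X$ is $c^\rho$-compact if and only if $RX$ is $c$-compact.
   Context: Standing setting. $\mathcal X$ and $\mathcal A$ are finitely complete categories; $\mathcal X$ carries a proper factorization system $(\mathcal E,\mathcal M)$ and $\mathcal A$ a proper factorization system $(\mathcal F,\mathcal N)$ (proper: every member of $\mathcal E$, resp. $\mathcal F$, is an epimorphism and every member of $\mathcal M$, resp. $\mathcal N$, is a monomorphism). $\mathcal A$ is a full reflective subcategory of $\mathcal X$ with reflector $R:\mathcal X\to\mathcal A$ and reflection (unit) $\rho_X:X\to RX$; as in the paper's setting, $\mathcal N\subseteq\mathcal M$ and $R\mathcal E\subseteq\mathcal F$. For $X\in\mathcal X$, $\operatorname{sub}X$ is the class $\mathcal M/X$ of $\mathcal M$-morphisms with codomain $X$, preordered by $m\le n$ iff $m=nj$ for some morphism $j$; for $A\in\mathcal A$, $\operatorname{sub}_{\mathcal A}A=\mathcal N/A$ with the same preorder. For $f:X\to Y$ and $m\in\operatorname{sub}X$, the image $f(m)\in\operatorname{sub}Y$ is the $\mathcal M$-part of the $(\mathcal E,\mathcal M)$-factorization of $fm$, and for $n\in\operatorname{sub}Y$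 the preimage $f^{-1}(n)\in\operatorname{sub}X$ is the pullback of $n$ along $f$ (analogously in $\mathcal A$ using $(\mathcal F,\mathcal N)$). A closure operator $c$ on $\mathcal A$ (with respect to $\mathcal N$) is a family of maps $c_A:\operatorname{sub}_{\mathcal A}A\to\operatorname{sub}_{\mathcal A}A$ ($A\in\mathcal A$) such that $m\le c_A(m)$, $m\le n\Rightarrow c_A(m)\le c_A(n)$, and $f(c_A(m))\le c_B(f(m))$ for every morphism $f:A\to B$ of $\mathcal A$; closure operators on $\mathcal X$ (with respect to $\mathcal M$) are defined likewise. For an arbitrary morphism $g:M\to A$ of $\mathcal A$, write $g(1_M)$ for the $\mathcal N$-part of its $(\mathcal F,\mathcal N)$-factorization and put $c_A(g):=c_A(g(1_M))$. The $R$-initial lift of $c$ is the closure operator $c^\rho$ on $\mathcal X$ given by $c^\rho_X(m)=\rho_X^{-1}(c_{RX}(Rm))$ for $X\in\mathcal X$, $m\in\operatorname{sub}X$. For a closure operator $d$ on a category, an object $X$ is $d$-compact if for every object $Y$ the projection $\pi_Y:X\times Y\to Y$ is $d$-preserving, i.e. $\pi_Y(d_{X\times Y}(m))=d_Y(\pi_Y(m))$ for every subobject $m$ of $X\times Y$ (for $c$-compactness of an object of $\mathcal A$, $Y$ ranges over $\mathcal A$ and subobjects over $\operatorname{sub}_{\mathcal A}$; for $c^\rho$-compactness, over $\mathcal X$ and $\operatorname{sub}$). *)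

theory Defs
  imports Main
begin

record ('o,'m) cat =
  Obj  :: "'o set"
  Arr  :: "'m set"
  Dom  :: "'m \<Rightarrow> 'o"
  Cod  :: "'m \<Rightarrow> 'o"
  Id   :: "'o \<Rightarrow> 'm"
  Comp :: "'m \<Rightarrow> 'm \<Rightarrow> 'm"   (* Comp C g f = g o f *)

definition hom :: "('o,'m) cat \<Rightarrow> 'o \<Rightarrow> 'o \<Rightarrow> 'm set" where
  "hom C X Y = {f \<in> Arr C. Dom C f = X \<and> Cod C f = Y}"

definition is_category :: "('o,'m) cat \<Rightarrow> bool" where
  "is_category C \<longleftrightarrow>
     (\<forall>f\<in>Arr C. Dom C f \<in> Obj C \<and> Cod C f \<in> Obj C) \<and>
     (\<forall>X\<in>Obj C. Id C X \<in> hom C X X) \<and>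
     (\<forall>f\<in>Arr C. \<forall>g\<in>Arr C. Cod C f = Dom C g \<longrightarrow> Comp C g f \<in> hom C (Dom C f) (Cod C g)) \<and>
     (\<forall>f\<in>Arr C. Comp C f (Id C (Dom C f)) = f \<and> Comp C (Id C (Cod C f)) f = f) \<and>
     (\<forall>f\<in>Arr C. \<forall>g\<in>Arr C. \<forall>h\<in>Arr C. Cod C f = Dom C g \<longrightarrow> Cod C g = Dom C h \<longrightarrow>
         Comp C h (Comp C g f) = Comp C (Comp C h g) f)"

text \<open>Everything below is relative to the full subcategory of C spanned by an object set S.\<close>

definition arrs :: "('o,'m) cat \<Rightarrow> 'o set \<Rightarrow> 'm set" where
  "arrs C S = {f \<in> Arr C. Dom C f \<in> S \<and> Cod C f \<in> S}"

definition is_iso :: "('o,'m) cat \<Rightarrow> 'm \<Rightarrow> bool" where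
  "is_iso C f \<longleftrightarrow> f \<in> Arr C \<and> (\<exists>g\<in>hom C (Cod C f) (Dom C f).
      Comp C g f = Id C (Dom C f) \<and> Comp C f g = Id C (Cod C f))"

definition is_mono :: "('o,'m) cat \<Rightarrow> 'o set \<Rightarrow> 'm \<Rightarrow> bool" where
  "is_mono C S f \<longleftrightarrow> f \<in> arrs C S \<and>
     (\<forall>g\<in>arrs C S. \<forall>h\<in>arrs C S. Cod C g = Dom C f \<and> Cod C h = Dom C f \<and> Dom C g = Dom C h
        \<and> Comp C f g = Comp C f h \<longrightarrow> g = h)"

definition is_epi :: "('o,'m) cat \<Rightarrow> 'o set \<Rightarrow> 'm \<Rightarrow> bool" where
  "is_epi C S f \<longleftrightarrow> f \<in> arrs C S \<and>
     (\<forall>g\<in>arrs C S. \<forall>h\<in>arrs C S. Dom C g = Cod C f \<and> Dom C h = Cod C f \<and> Cod C g = Cod C h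
        \<and> Comp C g f = Comp C h f \<longrightarrow> g = h)"

definition is_terminal :: "('o,'m) cat \<Rightarrow> 'o set \<Rightarrow> 'o \<Rightarrow> bool" where
  "is_terminal C S T \<longleftrightarrow> T \<in> S \<and> (\<forall>X\<in>S. \<exists>!t. t \<in> hom C X T)"

definition is_pullback :: "('o,'m) cat \<Rightarrow> 'o set \<Rightarrow> 'm \<Rightarrow> 'm \<Rightarrow> 'o \<Rightarrow> 'm \<Rightarrow> 'm \<Rightarrow> bool" where
  "is_pullback C S f g P p q \<longleftrightarrow>
     f \<in> arrs C S \<and> g \<in> arrs C S \<and> Cod C f = Cod C g \<and> P \<in> S \<and>
     p \<in> hom C P (Dom C f) \<and> q \<in> hom C P (Dom C g) \<and> Comp C f p = Comp C g q \<and>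
     (\<forall>Q\<in>S. \<forall>u\<in>hom C Q (Dom C f). \<forall>v\<in>hom C Q (Dom C g). Comp C f u = Comp C g v \<longrightarrow>
        (\<exists>!h. h \<in> hom C Q P \<and> Comp C p h = u \<and> Comp C q h = v))"

definition finitely_complete :: "('o,'m) cat \<Rightarrow> 'o set \<Rightarrow> bool" where
  "finitely_complete C S \<longleftrightarrow> (\<exists>T. is_terminal C S T) \<and>
     (\<forall>f\<in>arrs C S. \<forall>g\<in>arrs C S. Cod C f = Cod C g \<longrightarrow> (\<exists>P p q. is_pullback C S f g P p q))"

definition is_product :: "('o,'m) cat \<Rightarrow> 'o set \<Rightarrow> 'o \<Rightarrow> 'o \<Rightarrow> 'o \<Rightarrow> 'm \<Rightarrow> 'm \<Rightarrow> bool" where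
  "is_product C S X Y P p1 p2 \<longleftrightarrow> X \<in> S \<and> Y \<in> S \<and> P \<in> S \<and>
     p1 \<in> hom C P X \<and> p2 \<in> hom C P Y \<and>
     (\<forall>Q\<in>S. \<forall>u\<in>hom C Q X. \<forall>v\<in>hom C Q Y.
        \<exists>!h. h \<in> hom C Q P \<and> Comp C p1 h = u \<and> Comp C p2 h = v)"

definition factorization_system :: "('o,'m) cat \<Rightarrow> 'o set \<Rightarrow> 'm set \<Rightarrow> 'm set \<Rightarrow> bool" where
  "factorization_system C S E M \<longleftrightarrow>
     E \<subseteq> arrs C S \<and> M \<subseteq> arrs C S \<and>
     {f \<in> arrs C S. is_iso C f} \<subseteq> E \<inter> M \<and>
     (\<forall>e\<in>E. \<forall>i\<in>arrs C S. is_iso C i \<and> Cod C i = Dom C e \<longrightarrow> Comp C e i \<in> E) \<and>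
     (\<forall>e\<in>E. \<forall>i\<in>arrs C S. is_iso C i \<and> Dom C i = Cod C e \<longrightarrow> Comp C i e \<in> E) \<and>
     (\<forall>m\<in>M. \<forall>i\<in>arrs C S. is_iso C i \<and> Cod C i = Dom C m \<longrightarrow> Comp C m i \<in> M) \<and>
     (\<forall>m\<in>M. \<forall>i\<in>arrs C S. is_iso C i \<and> Dom C i = Cod C m \<longrightarrow> Comp C i m \<in> M) \<and>
     (\<forall>f\<in>arrs C S. \<exists>e\<in>E. \<exists>m\<in>M. Cod C e = Dom C m \<and> f = Comp C m e) \<and>
     (\<forall>e\<in>E. \<forall>m\<in>M. \<forall>u\<in>arrs C S. \<forall>v\<in>arrs C S.
        Dom C u = Dom C e \<and> Cod C u = Dom C m \<and> Dom C v = Cod C e \<and> Cod C v = Cod C m \<and>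
        Comp C v e = Comp C m u \<longrightarrow>
        (\<exists>!d. d \<in> hom C (Cod C e) (Dom C m) \<and> Comp C d e = u \<and> Comp C m d = v))"

definition proper_factorization_system :: "('o,'m) cat \<Rightarrow> 'o set \<Rightarrow> 'm set \<Rightarrow> 'm set \<Rightarrow> bool" where
  "proper_factorization_system C S E M \<longleftrightarrow> factorization_system C S E M \<and>
     (\<forall>e\<in>E. is_epi C S e) \<and> (\<forall>m\<in>M. is_mono C S m)"

definition pullback_stable :: "('o,'m) cat \<Rightarrow> 'o set \<Rightarrow> 'm set \<Rightarrow> bool" where
  "pullback_stable C S E \<longleftrightarrow>
     (\<forall>f e P k q. e \<in> E \<and> is_pullback C S f e P k q \<longrightarrow> k \<in> E)"

definition sub :: "('o,'m) cat \<Rightarrow> 'm set \<Rightarrow> 'o \<Rightarrow> 'm set" where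
  "sub C M X = {m \<in> M. Cod C m = X}"

definition sub_le :: "('o,'m) cat \<Rightarrow> 'm \<Rightarrow> 'm \<Rightarrow> bool" where
  "sub_le C m n \<longleftrightarrow> (\<exists>j\<in>hom C (Dom C m) (Dom C n). m = Comp C n j)"

definition sub_eq :: "('o,'m) cat \<Rightarrow> 'm \<Rightarrow> 'm \<Rightarrow> bool" where
  "sub_eq C m n \<longleftrightarrow> sub_le C m n \<and> sub_le C n m"

text \<open>n is (a representative of) the image f(m): the M-part of an (E,M)-factorization of f o m.\<close>
definition is_image :: "('o,'m) cat \<Rightarrow> 'm set \<Rightarrow> 'm set \<Rightarrow> 'm \<Rightarrow> 'm \<Rightarrow> 'm \<Rightarrow> bool" where
  "is_image C E M f m n \<longleftrightarrow> n \<in> M \<and> Cod C n = Cod C f \<and>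
     (\<exists>e\<in>E. Dom C e = Dom C m \<and> Cod C e = Dom C n \<and> Comp C f m = Comp C n e)"

definition image :: "('o,'m) cat \<Rightarrow> 'm set \<Rightarrow> 'm set \<Rightarrow> 'm \<Rightarrow> 'm \<Rightarrow> 'm" where
  "image C E M f m = (SOME n. is_image C E M f m n)"

definition preimage :: "('o,'m) cat \<Rightarrow> 'o set \<Rightarrow> 'm \<Rightarrow> 'm \<Rightarrow> 'm" where
  "preimage C S f n = (SOME k. \<exists>P q. is_pullback C S f n P k q)"

definition closure_op :: "('o,'m) cat \<Rightarrow> 'o set \<Rightarrow> 'm set \<Rightarrow> 'm set \<Rightarrow> ('o \<Rightarrow> 'm \<Rightarrow> 'm) \<Rightarrow> bool" where
  "closure_op C S E M c \<longleftrightarrow>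
     (\<forall>X\<in>S. \<forall>m\<in>sub C M X. c X m \<in> sub C M X \<and> sub_le C m (c X m)) \<and>
     (\<forall>X\<in>S. \<forall>m\<in>sub C M X. \<forall>n\<in>sub C M X. sub_le C m n \<longrightarrow> sub_le C (c X m) (c X n)) \<and>
     (\<forall>f\<in>arrs C S. \<forall>m\<in>sub C M (Dom C f).
        sub_le C (image C E M f (c (Dom C f) m)) (c (Cod C f) (image C E M f m)))"

definition preserving :: "('o,'m) cat \<Rightarrow> 'm set \<Rightarrow> 'm set \<Rightarrow> ('o \<Rightarrow> 'm \<Rightarrow> 'm) \<Rightarrow> 'm \<Rightarrow> bool" where
  "preserving C E M d f \<longleftrightarrow> (\<forall>m\<in>sub C M (Dom C f).
     sub_eq C (image C E M f (d (Dom C f) m)) (d (Cod C f) (image C E M f m)))"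

definition compact :: "('o,'m) cat \<Rightarrow> 'o set \<Rightarrow> 'm set \<Rightarrow> 'm set \<Rightarrow> ('o \<Rightarrow> 'm \<Rightarrow> 'm) \<Rightarrow> 'o \<Rightarrow> bool" where
  "compact C S E M d X \<longleftrightarrow>
     (\<forall>Y\<in>S. \<forall>P p1 p2. is_product C S X Y P p1 p2 \<longrightarrow> preserving C E M d p2)"

definition is_reflection_arrow :: "('o,'m) cat \<Rightarrow> 'o set \<Rightarrow> 'm \<Rightarrow> bool" where
  "is_reflection_arrow C A u \<longleftrightarrow> u \<in> Arr C \<and> Cod C u \<in> A \<and>
     (\<forall>B\<in>A. \<forall>f\<in>hom C (Dom C u) B. \<exists>!g. g \<in> hom C (Cod C u) B \<and> Comp C g u = f)"

definition reflective :: "('o,'m) cat \<Rightarrow> 'o set \<Rightarrow> ('o \<Rightarrow> 'o) \<Rightarrow> ('o \<Rightarrow> 'm) \<Rightarrow> bool" where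
  "reflective C A R \<rho> \<longleftrightarrow> A \<subseteq> Obj C \<and>
     (\<forall>X\<in>Obj C. R X \<in> A \<and> \<rho> X \<in> hom C X (R X) \<and> is_reflection_arrow C A (\<rho> X))"

definition Rmor :: "('o,'m) cat \<Rightarrow> ('o \<Rightarrow> 'o) \<Rightarrow> ('o \<Rightarrow> 'm) \<Rightarrow> 'm \<Rightarrow> 'm" where
  "Rmor C R \<rho> f = (THE h. h \<in> hom C (R (Dom C f)) (R (Cod C f)) \<and>
       Comp C h (\<rho> (Dom C f)) = Comp C (\<rho> (Cod C f)) f)"

text \<open>c^rho_X(m) = rho_X^{-1}(c_{RX}(Rm)), with c_{RX}(g) := c_{RX}(g(1)).\<close>
definition lift_closure :: "('o,'m) cat \<Rightarrow> 'o set \<Rightarrow> 'm set \<Rightarrow> 'm set \<Rightarrow> ('o \<Rightarrow> 'o) \<Rightarrow> ('o \<Rightarrow> 'm)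
    \<Rightarrow> ('o \<Rightarrow> 'm \<Rightarrow> 'm) \<Rightarrow> 'o \<Rightarrow> 'm \<Rightarrow> 'm" where
  "lift_closure C A F N R \<rho> c X m =
     preimage C (Obj C) (\<rho> X)
       (c (R X) (image C F N (Rmor C R \<rho> m) (Id C (R (Dom C m)))))"

definition preserves_products_with :: "('o,'m) cat \<Rightarrow> 'o set \<Rightarrow> ('o \<Rightarrow> 'o) \<Rightarrow> ('o \<Rightarrow> 'm) \<Rightarrow> 'o \<Rightarrow> bool" where
  "preserves_products_with C A R \<rho> X \<longleftrightarrow>
     (\<forall>Y\<in>Obj C. \<forall>P p1 p2 Q q1 q2 u.
        is_product C (Obj C) X Y P p1 p2 \<and> is_product C A (R X) (R Y) Q q1 q2 \<and>
        u \<in> hom C P Q \<and> Comp C q1 u = Comp C (\<rho> X) p1 \<and> Comp C q2 u = Comp C (\<rho> Y) p2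
        \<longrightarrow> is_reflection_arrow C A u)"

end

theory Submission
  imports Defs
begin

text \<open>The lifted closure \<open>c\<^sup>\<rho>(m)\<close> of \<open>m \<in> sub P\<close> is the pullback along \<open>\<rho> P\<close> of \<open>c\<close> applied to
  the least \<open>N\<close>-subobject through \<open>\<rho> P \<cdot> m\<close>, and \<open>\<rho> P\<close> may be replaced by any reflection arrow of
  \<open>P\<close>, because \<open>c\<close> commutes with isomorphisms.  If \<open>R\<close> preserves the product \<open>X \<times> Y\<close>, the
  reflection \<open>u : X \<times> Y \<rightarrow> R X \<times> R Y\<close> and \<open>\<rho> Y\<close> form a commutative square with the two
  projections onto \<open>Y\<close> and \<open>R Y\<close>.  Since reflection arrows lie in \<open>E\<close>, least \<open>N\<close>-subobjects are
  carried along this square by images; hence if the projection of \<open>X \<times> Y\<close> preserves \<open>c\<^sup>\<rho>\<close>,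
  the projection of \<open>R X \<times> R Y\<close> preserves \<open>c\<close> (objects of \<open>A\<close> being isomorphic to their
  reflections).  The converse also needs the Beck-Chevalley identity
  \<open>\<pi>\<^sub>Y(u\<^sup>-\<^sup>1(k)) = (\<rho> Y)\<^sup>-\<^sup>1(\<pi>\<^sub>R\<^sub>Y(k))\<close>, which follows from the stability of \<open>E\<close> under
  pullback and \<open>\<rho> X \<in> E\<close>.\<close>

section \<open>Subobjects, pullbacks and products\<close>

locale category =
  fixes C :: "('o,'m) cat"
  assumes is_cat: "is_category C"
begin

abbreviation cmp (infixr "\<cdot>" 55) where "g \<cdot> f \<equiv> Comp C g f"
abbreviation "dm \<equiv> Dom C"
abbreviation "cd \<equiv> Cod C"
abbreviation sub_le_in (infix "\<sqsubseteq>" 50) where "m \<sqsubseteq> n \<equiv> sub_le C m n"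
abbreviation sub_eq_in (infix "\<simeq>" 50) where "m \<simeq> n \<equiv> sub_eq C m n"

lemma hom_iff: "f \<in> hom C a b \<longleftrightarrow> f \<in> Arr C \<and> dm f = a \<and> cd f = b"
  by (simp add: hom_def)

lemma dom_cod_obj: "f \<in> Arr C \<Longrightarrow> dm f \<in> Obj C \<and> cd f \<in> Obj C"
  using is_cat unfolding is_category_def by blast

lemma comp_simps[simp]:
  assumes "f \<in> Arr C" "g \<in> Arr C" "cd f = dm g"
  shows "g \<cdot> f \<in> Arr C" "dm (g \<cdot> f) = dm f" "cd (g \<cdot> f) = cd g"
  using is_cat assms unfolding is_category_def hom_def by blast+

lemma comp_assoc[simp]:
  assumes "f \<in> Arr C" "g \<in> Arr C" "h \<in> Arr C" "cd f = dm g" "cd g = dm h"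
  shows "(h \<cdot> g) \<cdot> f = h \<cdot> (g \<cdot> f)"
  using is_cat assms unfolding is_category_def by metis

lemma comp_assoc_sym:
  assumes "f \<in> Arr C" "g \<in> Arr C" "h \<in> Arr C" "cd f = dm g" "cd g = dm h"
  shows "h \<cdot> (g \<cdot> f) = (h \<cdot> g) \<cdot> f"
  using comp_assoc[OF assms] by simp

lemma id_simps[simp]:
  assumes "a \<in> Obj C"
  shows "Id C a \<in> Arr C" "dm (Id C a) = a" "cd (Id C a) = a"
  using is_cat assms unfolding is_category_def hom_def by blast+

lemma id_left[simp]: "f \<in> Arr C \<Longrightarrow> cd f = a \<Longrightarrow> Id C a \<cdot> f = f"
  using is_cat unfolding is_category_def by blast

lemma id_right[simp]: "f \<in> Arr C \<Longrightarrow> dm f = a \<Longrightarrow> f \<cdot> Id C a = f"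
  using is_cat unfolding is_category_def by blast

lemma arrs_Obj[simp]: "arrs C (Obj C) = Arr C"
  using dom_cod_obj unfolding arrs_def by blast

lemma comp_eq_extend:
  assumes "a \<cdot> b = x \<cdot> d" "a \<in> Arr C" "b \<in> Arr C" "x \<in> Arr C" "d \<in> Arr C" "z \<in> Arr C"
    "cd b = dm a" "cd d = dm x" "cd z = dm b" "cd z = dm d"
  shows "a \<cdot> (b \<cdot> z) = x \<cdot> (d \<cdot> z)"
proof -
  have "a \<cdot> (b \<cdot> z) = (a \<cdot> b) \<cdot> z" by (rule comp_assoc_sym) (use assms in simp_all)
  also have "\<dots> = (x \<cdot> d) \<cdot> z" using assms(1) by simp
  also have "\<dots> = x \<cdot> (d \<cdot> z)" by (rule comp_assoc) (use assms in simp_all)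
  finally show ?thesis .
qed

lemma isoI:
  assumes "f \<in> Arr C" "g \<in> Arr C" "dm g = cd f" "cd g = dm f" "g \<cdot> f = Id C (dm f)" "f \<cdot> g = Id C (cd f)"
  shows "is_iso C f"
  unfolding is_iso_def hom_def using assms by blast

lemma iso_inverse:
  assumes "is_iso C i"
  obtains j where "i \<in> Arr C" "is_iso C j" "j \<in> Arr C" "dm j = cd i" "cd j = dm i"
    "j \<cdot> i = Id C (dm i)" "i \<cdot> j = Id C (cd i)"
proof -
  obtain j where j: "i \<in> Arr C" "j \<in> Arr C" "dm j = cd i" "cd j = dm i"
      "j \<cdot> i = Id C (dm i)" "i \<cdot> j = Id C (cd i)"
    using assms unfolding is_iso_def hom_def by blast
  then have "is_iso C j" using isoI[of j i] by simp
  then show ?thesis using that j by blast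
qed

lemma iso_arr: "is_iso C f \<Longrightarrow> f \<in> Arr C"
  unfolding is_iso_def by blast

lemma iso_cancel_left:
  assumes "is_iso C i" "a \<in> Arr C" "b \<in> Arr C" "cd a = dm i" "cd b = dm i" "i \<cdot> a = i \<cdot> b"
  shows "a = b"
proof -
  obtain j where j: "i \<in> Arr C" "j \<in> Arr C" "dm j = cd i" "cd j = dm i" "j \<cdot> i = Id C (dm i)"
    using iso_inverse[OF assms(1)] by blast
  have "a = (j \<cdot> i) \<cdot> a" using j assms by (simp del: comp_assoc)
  also have "\<dots> = j \<cdot> (i \<cdot> a)" by (rule comp_assoc) (use j assms in simp_all)
  also have "\<dots> = j \<cdot> (i \<cdot> b)" using assms(6) by simp
  also have "\<dots> = (j \<cdot> i) \<cdot> b" by (rule comp_assoc_sym) (use j assms in simp_all)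
  also have "\<dots> = b" using j assms by (simp del: comp_assoc)
  finally show ?thesis .
qed

lemma sub_le_iff: "m \<sqsubseteq> n \<longleftrightarrow> (\<exists>j. j \<in> Arr C \<and> dm j = dm m \<and> cd j = dm n \<and> m = n \<cdot> j)"
  unfolding sub_le_def hom_def by blast

lemma sub_le_iff_factor: "n \<in> Arr C \<Longrightarrow> m \<sqsubseteq> n \<longleftrightarrow> (\<exists>j. j \<in> Arr C \<and> cd j = dm n \<and> m = n \<cdot> j)"
  unfolding sub_le_iff by auto

lemma sub_le_arr: "m \<sqsubseteq> n \<Longrightarrow> n \<in> Arr C \<Longrightarrow> m \<in> Arr C \<and> cd m = cd n"
  unfolding sub_le_iff by auto

lemma sub_le_refl: "m \<in> Arr C \<Longrightarrow> m \<sqsubseteq> m"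
  unfolding sub_le_iff by (intro exI[of _ "Id C (dm m)"]) (simp add: dom_cod_obj)

lemma sub_le_compI: "b \<in> Arr C \<Longrightarrow> j \<in> Arr C \<Longrightarrow> cd j = dm b \<Longrightarrow> b \<cdot> j \<sqsubseteq> b"
  unfolding sub_le_iff by (intro exI[of _ j]) simp

lemma sub_le_trans: assumes "a \<sqsubseteq> b" "b \<sqsubseteq> z" "z \<in> Arr C" shows "a \<sqsubseteq> z"
proof -
  obtain j' where j': "j' \<in> Arr C" "cd j' = dm z" "b = z \<cdot> j'"
    using assms(2,3) sub_le_iff_factor by blast
  then obtain j where j: "j \<in> Arr C" "cd j = dm j'" "a = (z \<cdot> j') \<cdot> j"
    using assms(1,3) sub_le_iff_factor[of b a] by auto
  then have "a = z \<cdot> (j' \<cdot> j)" using j' assms(3) by simp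
  then show ?thesis using sub_le_compI[of z "j' \<cdot> j"] j j' assms(3) by simp
qed

lemma sub_le_comp_left:
  assumes "a \<sqsubseteq> b" "g \<in> Arr C" "b \<in> Arr C" "cd b = dm g"
  shows "g \<cdot> a \<sqsubseteq> g \<cdot> b"
proof -
  obtain j where j: "j \<in> Arr C" "cd j = dm b" "a = b \<cdot> j" using assms(1,3) sub_le_iff_factor by blast
  then have "g \<cdot> a = (g \<cdot> b) \<cdot> j" using assms(2-) by simp
  then show ?thesis using sub_le_compI[of "g \<cdot> b" j] j assms(2-) by simp
qed

lemma sub_le_comp_right:
  assumes "a \<sqsubseteq> b" "h \<in> Arr C" "b \<in> Arr C" "cd h = dm a"
  shows "a \<cdot> h \<sqsubseteq> b"
proof -
  obtain j where j: "j \<in> Arr C" "cd j = dm b" "a = b \<cdot> j" using assms(1,3) sub_le_iff_factor by blast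
  then have hj: "cd h = dm j" using assms(3,4) by simp
  then have "a \<cdot> h = b \<cdot> (j \<cdot> h)" using j assms(2,3) by simp
  then show ?thesis using sub_le_compI[of b "j \<cdot> h"] j assms(2,3) hj by simp
qed

lemma sub_eq_iff: "a \<simeq> b \<longleftrightarrow> a \<sqsubseteq> b \<and> b \<sqsubseteq> a"
  unfolding sub_eq_def by simp

lemma sub_eq_sym: "a \<simeq> b \<Longrightarrow> b \<simeq> a"
  unfolding sub_eq_iff by blast

lemma sub_eq_trans: "a \<simeq> b \<Longrightarrow> b \<simeq> z \<Longrightarrow> a \<in> Arr C \<Longrightarrow> b \<in> Arr C \<Longrightarrow> z \<in> Arr C \<Longrightarrow> a \<simeq> z"
  unfolding sub_eq_iff using sub_le_trans[of a b z] sub_le_trans[of z b a] by blast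

lemma sub_eq_comp_left:
  assumes "a \<simeq> b" "g \<in> Arr C" "b \<in> Arr C" "cd b = dm g"
  shows "g \<cdot> a \<simeq> g \<cdot> b"
  using assms sub_le_arr[of a b] sub_le_comp_left[of a b g] sub_le_comp_left[of b a g]
  unfolding sub_eq_iff by simp

text \<open>For \<open>K = N\<close> this models the paper's \<open>h(1\<^sub>M)\<close> for an arbitrary arrow \<open>h\<close>, whose domain
  need not lie in \<open>A\<close>.\<close>

definition least_sub :: "'m set \<Rightarrow> 'm \<Rightarrow> 'm \<Rightarrow> bool" where
  "least_sub K h k \<longleftrightarrow> k \<in> K \<and> cd k = cd h \<and> h \<sqsubseteq> k \<and> (\<forall>n\<in>K. cd n = cd h \<longrightarrow> h \<sqsubseteq> n \<longrightarrow> k \<sqsubseteq> n)"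

lemma least_sub_unique: "least_sub K h k1 \<Longrightarrow> least_sub K h k2 \<Longrightarrow> k1 \<simeq> k2"
  unfolding least_sub_def sub_eq_iff by blast

lemma least_sub_self: "k \<in> K \<Longrightarrow> K \<subseteq> Arr C \<Longrightarrow> least_sub K k k"
  unfolding least_sub_def using sub_le_refl by blast

lemma least_sub_sub_eq:
  assumes "least_sub K h k" "k \<simeq> k'" "k' \<in> K" "K \<subseteq> Arr C"
  shows "least_sub K h k'"
proof -
  have k: "k \<in> Arr C" "k' \<in> Arr C" using assms unfolding least_sub_def by auto
  have c: "cd k' = cd k" using sub_le_arr assms(2) k unfolding sub_eq_iff by blast
  have "h \<sqsubseteq> k" "k \<sqsubseteq> k'" "k' \<sqsubseteq> k" using assms unfolding least_sub_def sub_eq_iff by auto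
  then have "h \<sqsubseteq> k'" using sub_le_trans[of h k k'] k by blast
  moreover have "k' \<sqsubseteq> n" if "n \<in> K" "cd n = cd h" "h \<sqsubseteq> n" for n
  proof -
    have "k \<sqsubseteq> n" using assms(1) that unfolding least_sub_def by blast
    then show ?thesis using sub_le_trans[of k' k n] \<open>k' \<sqsubseteq> k\<close> that assms(4) by blast
  qed
  ultimately show ?thesis using assms c unfolding least_sub_def by simp
qed

lemma least_sub_cong:
  assumes "least_sub K h k" "h \<simeq> h'" "h \<in> Arr C" "h' \<in> Arr C" "K \<subseteq> Arr C"
  shows "least_sub K h' k"
proof -
  have c: "cd h' = cd h" using sub_le_arr assms unfolding sub_eq_iff by blast
  have hh: "h' \<sqsubseteq> h" "h \<sqsubseteq> h'" "h \<sqsubseteq> k" "k \<in> K" using assms unfolding least_sub_def sub_eq_iff by auto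
  then have "h' \<sqsubseteq> k" using sub_le_trans[of h' h k] assms(5) by blast
  moreover have "k \<sqsubseteq> n" if "n \<in> K" "cd n = cd h'" "h' \<sqsubseteq> n" for n
  proof -
    have "h \<sqsubseteq> n" using sub_le_trans[of h h' n] hh that assms(5) by blast
    then show ?thesis using assms(1) that c unfolding least_sub_def by auto
  qed
  ultimately show ?thesis using assms c unfolding least_sub_def by simp
qed

abbreviation "pb \<equiv> is_pullback C (Obj C)"

lemma pullback_parts:
  assumes "pb a n P p q"
  shows "a \<in> Arr C" "n \<in> Arr C" "cd a = cd n" "P \<in> Obj C" "p \<in> Arr C" "dm p = P" "cd p = dm a"
    "q \<in> Arr C" "dm q = P" "cd q = dm n" "a \<cdot> p = n \<cdot> q"
  using assms unfolding is_pullback_def hom_iff arrs_Obj by auto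

lemma pullback_sym: "pb a n P p q \<Longrightarrow> pb n a P q p"
  unfolding is_pullback_def by metis

lemma pullback_lift:
  assumes "pb a n P p q" "z \<in> Arr C" "y \<in> Arr C" "dm z = dm y" "cd z = dm a" "cd y = dm n"
    "a \<cdot> z = n \<cdot> y"
  obtains h where "h \<in> Arr C" "dm h = dm z" "cd h = P" "p \<cdot> h = z" "q \<cdot> h = y"
proof -
  have "dm z \<in> Obj C" using dom_cod_obj assms(2) by blast
  moreover have "z \<in> hom C (dm z) (dm a)" "y \<in> hom C (dm z) (dm n)" using assms by (auto simp: hom_iff)
  ultimately have "\<exists>!h. h \<in> hom C (dm z) P \<and> p \<cdot> h = z \<and> q \<cdot> h = y"
    using assms(1,7) unfolding is_pullback_def by blast
  then show ?thesis using that unfolding hom_iff by blast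
qed

lemma pullback_lift_unique:
  assumes "pb a n P p q" "h1 \<in> Arr C" "h2 \<in> Arr C" "dm h1 = dm h2" "cd h1 = P" "cd h2 = P"
    "p \<cdot> h1 = p \<cdot> h2" "q \<cdot> h1 = q \<cdot> h2"
  shows "h1 = h2"
proof -
  note pp = pullback_parts[OF assms(1)]
  have "a \<cdot> (p \<cdot> h1) = n \<cdot> (q \<cdot> h1)" by (rule comp_eq_extend[OF pp(11)]) (use pp assms in simp_all)
  moreover have "dm h1 \<in> Obj C" using dom_cod_obj assms(2) by blast
  moreover have "p \<cdot> h1 \<in> hom C (dm h1) (dm a)" "q \<cdot> h1 \<in> hom C (dm h1) (dm n)"
    using assms pp by (auto simp: hom_iff)
  ultimately have "\<exists>!h. h \<in> hom C (dm h1) P \<and> p \<cdot> h = p \<cdot> h1 \<and> q \<cdot> h = q \<cdot> h1"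
    using assms(1) unfolding is_pullback_def by blast
  moreover have "h1 \<in> hom C (dm h1) P" "h2 \<in> hom C (dm h1) P" using assms by (auto simp: hom_iff)
  ultimately show ?thesis using assms(7,8) by metis
qed

lemma pullback_sub_le:
  assumes "pb a n P p q" "z \<in> Arr C" "y \<in> Arr C" "dm z = dm y" "cd z = dm a" "cd y = dm n"
    "a \<cdot> z = n \<cdot> y"
  shows "z \<sqsubseteq> p"
proof -
  obtain h where "h \<in> Arr C" "cd h = P" "p \<cdot> h = z" using pullback_lift[OF assms] by metis
  then show ?thesis using sub_le_compI[of p h] pullback_parts[OF assms(1)] by simp
qed

lemma pullback_mono:
  assumes "pb a n1 P1 l1 t1" "pb a n2 P2 l2 t2" "n1 \<sqsubseteq> n2"
  shows "l1 \<sqsubseteq> l2"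
proof -
  note p1 = pullback_parts[OF assms(1)] and p2 = pullback_parts[OF assms(2)]
  obtain j where j: "j \<in> Arr C" "cd j = dm n2" "n1 = n2 \<cdot> j"
    using assms(3) p2(2) sub_le_iff_factor by blast
  then have "a \<cdot> l1 = n2 \<cdot> (j \<cdot> t1)" using p1 p2(2) by simp
  then show ?thesis using pullback_sub_le[OF assms(2) p1(5), of "j \<cdot> t1"] j p1 p2 by simp
qed

lemma pullback_sub_eq: "pb a n1 P1 l1 t1 \<Longrightarrow> pb a n2 P2 l2 t2 \<Longrightarrow> n1 \<simeq> n2 \<Longrightarrow> l1 \<simeq> l2"
  using pullback_mono unfolding sub_eq_iff by blast

lemma pullback_iso_comp:
  assumes "pb r n P1 l1 t1" "pb (i \<cdot> r) (i \<cdot> n) P2 l2 t2" "is_iso C i" "dm i = cd r"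
  shows "l1 \<simeq> l2"
proof -
  note p1 = pullback_parts[OF assms(1)] and p2 = pullback_parts[OF assms(2)]
  have i: "i \<in> Arr C" "dm i = cd r" "dm i = cd n" using iso_arr assms(3,4) p1(3) by auto
  have "(i \<cdot> r) \<cdot> l1 = i \<cdot> (r \<cdot> l1)" by (rule comp_assoc) (use p1 i in simp_all)
  also have "\<dots> = i \<cdot> (n \<cdot> t1)" using p1(11) by simp
  also have "\<dots> = (i \<cdot> n) \<cdot> t1" by (rule comp_assoc_sym) (use p1 i in simp_all)
  finally have "(i \<cdot> r) \<cdot> l1 = (i \<cdot> n) \<cdot> t1" .
  from pullback_sub_le[OF assms(2) p1(5) p1(8) _ _ _ this] have "l1 \<sqsubseteq> l2" using p1 i by simp
  have "i \<cdot> (r \<cdot> l2) = (i \<cdot> r) \<cdot> l2" by (rule comp_assoc_sym) (use p1 p2 i in simp_all)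
  also have "\<dots> = (i \<cdot> n) \<cdot> t2" using p2(11) .
  also have "\<dots> = i \<cdot> (n \<cdot> t2)" by (rule comp_assoc) (use p1 p2 i in simp_all)
  finally have "i \<cdot> (r \<cdot> l2) = i \<cdot> (n \<cdot> t2)" .
  from iso_cancel_left[OF assms(3) _ _ _ _ this] have "r \<cdot> l2 = n \<cdot> t2" using p1 p2 i by simp
  from pullback_sub_le[OF assms(1) p2(5) p2(8) _ _ _ this] have "l2 \<sqsubseteq> l1" using p1 p2 i by simp
  with \<open>l1 \<sqsubseteq> l2\<close> show ?thesis unfolding sub_eq_iff by blast
qed

lemma pullback_exists:
  "finitely_complete C (Obj C) \<Longrightarrow> a \<in> Arr C \<Longrightarrow> n \<in> Arr C \<Longrightarrow> cd a = cd n \<Longrightarrow> \<exists>P p q. pb a n P p q"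
  unfolding finitely_complete_def arrs_Obj by blast

lemma preimage_is_pullback:
  assumes "finitely_complete C (Obj C)" "a \<in> Arr C" "n \<in> Arr C" "cd a = cd n"
  obtains P q where "pb a n P (preimage C (Obj C) a n) q"
proof -
  obtain P p q where "pb a n P p q" using pullback_exists[OF assms] by blast
  then have "\<exists>k P q. pb a n P k q" by blast
  then have "\<exists>P q. pb a n P (preimage C (Obj C) a n) q" unfolding preimage_def by (rule someI_ex)
  then show ?thesis using that by blast
qed

lemma product_parts:
  assumes "is_product C S X Y P p1 p2"
  shows "X \<in> S" "Y \<in> S" "P \<in> S" "p1 \<in> Arr C" "dm p1 = P" "cd p1 = X" "p2 \<in> Arr C" "dm p2 = P" "cd p2 = Y"
  using assms unfolding is_product_def hom_iff by auto

lemma product_univ: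
  assumes "is_product C S X Y P p1 p2" "Z \<in> S" "a \<in> Arr C" "dm a = Z" "cd a = X"
    "b \<in> Arr C" "dm b = Z" "cd b = Y"
  shows "\<exists>!h. h \<in> hom C Z P \<and> p1 \<cdot> h = a \<and> p2 \<cdot> h = b"
proof -
  have "a \<in> hom C Z X" "b \<in> hom C Z Y" using assms by (auto simp: hom_iff)
  then show ?thesis using assms(1,2) unfolding is_product_def by blast
qed

lemma product_lift:
  assumes "is_product C (Obj C) X Y P p1 p2" "a \<in> Arr C" "cd a = X" "b \<in> Arr C" "dm b = dm a" "cd b = Y"
  obtains h where "h \<in> Arr C" "dm h = dm a" "cd h = P" "p1 \<cdot> h = a" "p2 \<cdot> h = b"
proof -
  have "dm a \<in> Obj C" using dom_cod_obj assms by blast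
  then have "\<exists>!h. h \<in> hom C (dm a) P \<and> p1 \<cdot> h = a \<and> p2 \<cdot> h = b" using product_univ[OF assms(1)] assms by simp
  then show ?thesis using that unfolding hom_iff by blast
qed

lemma product_lift_unique:
  assumes "is_product C (Obj C) X Y P p1 p2" "h1 \<in> Arr C" "h2 \<in> Arr C" "dm h1 = dm h2"
    "cd h1 = P" "cd h2 = P" "p1 \<cdot> h1 = p1 \<cdot> h2" "p2 \<cdot> h1 = p2 \<cdot> h2"
  shows "h1 = h2"
proof -
  note pp = product_parts[OF assms(1)]
  have "\<exists>!h. h \<in> hom C (dm h1) P \<and> p1 \<cdot> h = p1 \<cdot> h1 \<and> p2 \<cdot> h = p2 \<cdot> h1"
    by (rule product_univ[OF assms(1)]) (use assms pp dom_cod_obj in simp_all)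
  moreover have "h1 \<in> hom C (dm h1) P" "h2 \<in> hom C (dm h1) P" using assms by (auto simp: hom_iff)
  ultimately show ?thesis using assms(7,8) by metis
qed

lemma product_arrow_pair:
  assumes PP: "is_product C (Obj C) X Y P p1 p2" and QQ: "is_product C (Obj C) X' Y' Q q1 q2"
    and u: "u \<in> Arr C" "dm u = P" "cd u = Q" and a: "a \<in> Arr C" "dm a = X" and b: "b \<in> Arr C" "dm b = Y"
    and ua: "q1 \<cdot> u = a \<cdot> p1" and ub: "q2 \<cdot> u = b \<cdot> p2"
    and x: "x \<in> Arr C" "cd x = X" and y: "y \<in> Arr C" "dm y = dm x" "cd y = Y"
    and c: "c \<in> Arr C" "dm c = dm x" "cd c = Q" "q1 \<cdot> c = a \<cdot> x" "q2 \<cdot> c = b \<cdot> y"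
  obtains z where "z \<in> Arr C" "dm z = dm x" "cd z = P" "p1 \<cdot> z = x" "p2 \<cdot> z = y" "u \<cdot> z = c"
proof -
  note pp = product_parts[OF PP] and qq = product_parts[OF QQ]
  obtain z where z: "z \<in> Arr C" "dm z = dm x" "cd z = P" "p1 \<cdot> z = x" "p2 \<cdot> z = y"
    by (rule product_lift[OF PP x(1,2) y]) simp_all
  have "q1 \<cdot> (u \<cdot> z) = a \<cdot> (p1 \<cdot> z)" by (rule comp_eq_extend[OF ua]) (use u a z pp qq in simp_all)
  then have 1: "q1 \<cdot> (u \<cdot> z) = q1 \<cdot> c" using z(4) c(4) by simp
  have "q2 \<cdot> (u \<cdot> z) = b \<cdot> (p2 \<cdot> z)" by (rule comp_eq_extend[OF ub]) (use u b z pp qq in simp_all)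
  then have 2: "q2 \<cdot> (u \<cdot> z) = q2 \<cdot> c" using z(5) c(5) by simp
  have "u \<cdot> z = c" by (rule product_lift_unique[OF QQ _ _ _ _ _ 1 2]) (use u z c in simp_all)
  then show ?thesis using that z by blast
qed

text \<open>A product is a pullback over the terminal object.\<close>

lemma product_exists:
  assumes "finitely_complete C S" "X \<in> S" "Y \<in> S"
  obtains P p1 p2 where "is_product C S X Y P p1 p2"
proof -
  obtain T where "is_terminal C S T" using assms(1) unfolding finitely_complete_def by blast
  then have T: "T \<in> S" "\<And>Z. Z \<in> S \<Longrightarrow> \<exists>!t. t \<in> hom C Z T"
    unfolding is_terminal_def by auto
  obtain tX tY where t: "tX \<in> hom C X T" "tY \<in> hom C Y T" using T(2) assms(2,3) by blast
  then have "tX \<in> arrs C S" "tY \<in> arrs C S" "cd tX = cd tY"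
    using assms T(1) unfolding arrs_def hom_iff by auto
  then obtain P p q where pb: "is_pullback C S tX tY P p q"
    using assms(1) unfolding finitely_complete_def by blast
  have univ: "\<forall>Q\<in>S. \<forall>u\<in>hom C Q (dm tX). \<forall>v\<in>hom C Q (dm tY). tX \<cdot> u = tY \<cdot> v \<longrightarrow>
      (\<exists>!h. h \<in> hom C Q P \<and> p \<cdot> h = u \<and> q \<cdot> h = v)"
    using pb unfolding is_pullback_def by (elim conjE) assumption
  have "is_product C S X Y P p q"
    unfolding is_product_def
  proof (intro conjI ballI)
    show "X \<in> S" "Y \<in> S" "P \<in> S" using assms pb unfolding is_pullback_def by auto
    show "p \<in> hom C P X" "q \<in> hom C P Y" using pb t unfolding is_pullback_def hom_iff by auto
    fix Z a b assume Z: "Z \<in> S" and ab: "a \<in> hom C Z X" "b \<in> hom C Z Y"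
    have "tX \<cdot> a \<in> hom C Z T" "tY \<cdot> b \<in> hom C Z T" using ab t unfolding hom_iff by auto
    then have "tX \<cdot> a = tY \<cdot> b" using T(2)[OF Z] by blast
    moreover have "a \<in> hom C Z (dm tX)" "b \<in> hom C Z (dm tY)" using ab t by (auto simp: hom_iff)
    ultimately show "\<exists>!h. h \<in> hom C Z P \<and> p \<cdot> h = a \<and> q \<cdot> h = b" using univ Z by blast
  qed
  then show ?thesis using that by blast
qed

lemma product_comp_iso:
  assumes "is_product C S X Y P p1 p2" "is_iso C i" "dm i = Y" "cd i = Y'" "Y' \<in> S"
  shows "is_product C S X Y' P p1 (i \<cdot> p2)"
  unfolding is_product_def
proof (intro conjI ballI)
  note pp = product_parts[OF assms(1)]
  obtain j where j: "i \<in> Arr C" "dm i = Y" "cd i = Y'" "j \<in> Arr C" "dm j = Y'" "cd j = Y"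
      "j \<cdot> i = Id C Y" "i \<cdot> j = Id C Y'"
    using iso_inverse[OF assms(2)] assms(3,4) by metis
  show "X \<in> S" "Y' \<in> S" "P \<in> S" "p1 \<in> hom C P X" "i \<cdot> p2 \<in> hom C P Y'"
    using pp assms j by (auto simp: hom_iff)
  fix Z a b assume Z: "Z \<in> S" and ab: "a \<in> hom C Z X" "b \<in> hom C Z Y'"
  then have ab': "a \<in> Arr C" "dm a = Z" "cd a = X" "b \<in> Arr C" "dm b = Z" "cd b = Y'"
    by (auto simp: hom_iff)
  have "\<exists>!h. h \<in> hom C Z P \<and> p1 \<cdot> h = a \<and> p2 \<cdot> h = j \<cdot> b"
    by (rule product_univ[OF assms(1) Z]) (use ab' j in simp_all)
  then obtain h where h: "h \<in> hom C Z P" "p1 \<cdot> h = a" "p2 \<cdot> h = j \<cdot> b"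
    and h_unique: "\<And>h'. h' \<in> hom C Z P \<and> p1 \<cdot> h' = a \<and> p2 \<cdot> h' = j \<cdot> b \<Longrightarrow> h' = h"
    by metis
  have "(i \<cdot> p2) \<cdot> h = i \<cdot> (j \<cdot> b)" using h pp j assms(3) by (auto simp: hom_iff)
  also have "\<dots> = (i \<cdot> j) \<cdot> b" by (rule comp_assoc_sym) (use j ab' in simp_all)
  finally have "(i \<cdot> p2) \<cdot> h = b" using j ab' by simp
  moreover have "h' = h" if h': "h' \<in> hom C Z P" "p1 \<cdot> h' = a" "(i \<cdot> p2) \<cdot> h' = b" for h'
  proof -
    have h'a: "h' \<in> Arr C" "dm h' = Z" "cd h' = P" using h' by (auto simp: hom_iff)
    have "p2 \<cdot> h' = (j \<cdot> i) \<cdot> (p2 \<cdot> h')" using h'a pp j by (simp del: comp_assoc)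
    also have "\<dots> = j \<cdot> (i \<cdot> (p2 \<cdot> h'))" by (rule comp_assoc) (use h'a pp j in simp_all)
    also have "i \<cdot> (p2 \<cdot> h') = (i \<cdot> p2) \<cdot> h'" by (rule comp_assoc_sym) (use h'a pp j in simp_all)
    finally have "p2 \<cdot> h' = j \<cdot> b" using h'(3) by simp
    then show ?thesis using h_unique h' by blast
  qed
  ultimately show "\<exists>!h. h \<in> hom C Z P \<and> p1 \<cdot> h = a \<and> (i \<cdot> p2) \<cdot> h = b" using h(1,2) by blast
qed

end

section \<open>Reflective subcategories\<close>

locale reflection = category +
  fixes A R \<rho>
  assumes reflective: "reflective C A R \<rho>"
begin

lemma A_sub_Obj: "A \<subseteq> Obj C"
  using reflective unfolding reflective_def by blast

lemma R_in_A: "X \<in> Obj C \<Longrightarrow> R X \<in> A"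
  using reflective unfolding reflective_def by blast

lemma rho_simps[simp]: "X \<in> Obj C \<Longrightarrow> \<rho> X \<in> Arr C" "X \<in> Obj C \<Longrightarrow> dm (\<rho> X) = X" "X \<in> Obj C \<Longrightarrow> cd (\<rho> X) = R X"
  using reflective unfolding reflective_def hom_iff by blast+

lemma rho_reflection: "X \<in> Obj C \<Longrightarrow> is_reflection_arrow C A (\<rho> X)"
  using reflective unfolding reflective_def by blast

lemma reflection_arrow_parts: "is_reflection_arrow C A u \<Longrightarrow> u \<in> Arr C \<and> cd u \<in> A"
  unfolding is_reflection_arrow_def by blast

lemma reflection_univ:
  assumes "is_reflection_arrow C A u" "B \<in> A" "f \<in> Arr C" "dm f = dm u" "cd f = B"
  shows "\<exists>!g. g \<in> hom C (cd u) B \<and> g \<cdot> u = f"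
proof -
  have "f \<in> hom C (dm u) B" using assms by (simp add: hom_iff)
  then show ?thesis using assms(1,2) unfolding is_reflection_arrow_def by blast
qed

lemma reflection_factor:
  assumes "is_reflection_arrow C A u" "B \<in> A" "f \<in> Arr C" "dm f = dm u" "cd f = B"
  obtains g where "g \<in> Arr C" "dm g = cd u" "cd g = B" "g \<cdot> u = f"
  using reflection_univ[OF assms] by (auto simp: hom_iff)

lemma reflection_ext:
  assumes "is_reflection_arrow C A u" "B \<in> A" "g \<in> Arr C" "dm g = cd u" "cd g = B"
    "h \<in> Arr C" "dm h = cd u" "cd h = B" "g \<cdot> u = h \<cdot> u"
  shows "g = h"
proof -
  have "\<exists>!g'. g' \<in> hom C (cd u) B \<and> g' \<cdot> u = g \<cdot> u"
    using reflection_univ[OF assms(1,2)] assms reflection_arrow_parts[OF assms(1)] by simp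
  moreover have "g \<in> hom C (cd u) B" "h \<in> hom C (cd u) B" using assms by (auto simp: hom_iff)
  ultimately show ?thesis using assms(9) by metis
qed

lemma reflection_arrows_iso:
  assumes "is_reflection_arrow C A u" "is_reflection_arrow C A u'" "dm u = dm u'"
  obtains i where "is_iso C i" "i \<in> Arr C" "dm i = cd u'" "cd i = cd u" "i \<cdot> u' = u"
proof -
  have u: "u \<in> Arr C" "cd u \<in> A" "u' \<in> Arr C" "cd u' \<in> A" using reflection_arrow_parts assms by auto
  obtain i where i: "i \<in> Arr C" "dm i = cd u'" "cd i = cd u" "i \<cdot> u' = u"
    using reflection_factor[OF assms(2) u(2,1)] assms(3) by metis
  obtain j where j: "j \<in> Arr C" "dm j = cd u" "cd j = cd u'" "j \<cdot> u = u'"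
    using reflection_factor[OF assms(1) u(4,3)] assms(3) by metis
  have o: "cd u \<in> Obj C" "cd u' \<in> Obj C" using u A_sub_Obj by auto
  have "(j \<cdot> i) \<cdot> u' = Id C (cd u') \<cdot> u'" using i j u by simp
  then have ji: "j \<cdot> i = Id C (cd u')" by (rule reflection_ext[OF assms(2) u(4), rotated -1]) (use i j o in auto)
  have "(i \<cdot> j) \<cdot> u = Id C (cd u) \<cdot> u" using i j u by simp
  then have ij: "i \<cdot> j = Id C (cd u)" by (rule reflection_ext[OF assms(1) u(2), rotated -1]) (use i j o in auto)
  have "is_iso C i" using isoI[of i j] i j ij ji by simp
  then show ?thesis using that i by blast
qed

lemma Id_reflection_arrow:
  assumes "B \<in> A"
  shows "is_reflection_arrow C A (Id C B)"
proof -
  have o: "B \<in> Obj C" using A_sub_Obj assms by blast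
  have "\<exists>!g. g \<in> hom C B B' \<and> g \<cdot> Id C B = f" if "f \<in> hom C B B'" for B' f
    using that by (auto simp: hom_iff)
  then show ?thesis unfolding is_reflection_arrow_def using o assms by simp
qed

lemma rho_iso_on_A:
  assumes "B \<in> A"
  shows "is_iso C (\<rho> B)"
proof -
  have o: "B \<in> Obj C" using A_sub_Obj assms by blast
  obtain i where "is_iso C i" "i \<in> Arr C" "dm i = B" "i \<cdot> Id C B = \<rho> B"
    using reflection_arrows_iso[OF rho_reflection[OF o] Id_reflection_arrow[OF assms]] o by auto
  then show ?thesis by simp
qed

lemma Rmor_props:
  assumes "m \<in> Arr C"
  shows "Rmor C R \<rho> m \<in> Arr C" "dm (Rmor C R \<rho> m) = R (dm m)" "cd (Rmor C R \<rho> m) = R (cd m)"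
    "Rmor C R \<rho> m \<cdot> \<rho> (dm m) = \<rho> (cd m) \<cdot> m"
proof -
  have o: "dm m \<in> Obj C" "cd m \<in> Obj C" using dom_cod_obj assms by auto
  have "\<exists>!g. g \<in> hom C (R (dm m)) (R (cd m)) \<and> g \<cdot> \<rho> (dm m) = \<rho> (cd m) \<cdot> m"
    using reflection_univ[OF rho_reflection[OF o(1)] R_in_A[OF o(2)]] o assms by simp
  then have "Rmor C R \<rho> m \<in> hom C (R (dm m)) (R (cd m)) \<and> Rmor C R \<rho> m \<cdot> \<rho> (dm m) = \<rho> (cd m) \<cdot> m"
    unfolding Rmor_def by (rule theI')
  then show "Rmor C R \<rho> m \<in> Arr C" "dm (Rmor C R \<rho> m) = R (dm m)" "cd (Rmor C R \<rho> m) = R (cd m)"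
    "Rmor C R \<rho> m \<cdot> \<rho> (dm m) = \<rho> (cd m) \<cdot> m" by (auto simp: hom_iff)
qed

text \<open>Arrows into objects of \<open>A\<close> factor uniquely through \<open>\<rho>\<close>.\<close>

lemma product_in_A_is_product:
  assumes "is_product C A X Y Q q1 q2"
  shows "is_product C (Obj C) X Y Q q1 q2"
  unfolding is_product_def
proof (intro conjI ballI)
  note qq = product_parts[OF assms]
  show "X \<in> Obj C" "Y \<in> Obj C" "Q \<in> Obj C" "q1 \<in> hom C Q X" "q2 \<in> hom C Q Y"
    using qq A_sub_Obj by (auto simp: hom_iff)
  fix Z a b assume Z: "Z \<in> Obj C" and ab: "a \<in> hom C Z X" "b \<in> hom C Z Y"
  then have ab': "a \<in> Arr C" "dm a = Z" "cd a = X" "b \<in> Arr C" "dm b = Z" "cd b = Y" by (auto simp: hom_iff)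
  note \<rho>Z = rho_reflection[OF Z]
  obtain a' where a': "a' \<in> Arr C" "dm a' = R Z" "cd a' = X" "a' \<cdot> \<rho> Z = a"
    by (rule reflection_factor[OF \<rho>Z qq(1) ab'(1)]) (use ab' Z in auto)
  obtain b' where b': "b' \<in> Arr C" "dm b' = R Z" "cd b' = Y" "b' \<cdot> \<rho> Z = b"
    by (rule reflection_factor[OF \<rho>Z qq(2) ab'(4)]) (use ab' Z in auto)
  obtain h' where h': "h' \<in> hom C (R Z) Q" "q1 \<cdot> h' = a'" "q2 \<cdot> h' = b'"
    and h'_unique: "\<And>g. g \<in> hom C (R Z) Q \<and> q1 \<cdot> g = a' \<and> q2 \<cdot> g = b' \<Longrightarrow> g = h'"
    using product_univ[OF assms R_in_A[OF Z] a'(1,2,3) b'(1,2,3)] by metis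
  have h'a: "h' \<in> Arr C" "dm h' = R Z" "cd h' = Q" using h'(1) by (auto simp: hom_iff)
  have "h' \<cdot> \<rho> Z \<in> hom C Z Q \<and> q1 \<cdot> (h' \<cdot> \<rho> Z) = a \<and> q2 \<cdot> (h' \<cdot> \<rho> Z) = b"
    using h' h'a a' b' qq Z by (auto simp: hom_iff simp flip: comp_assoc)
  moreover have "h = h' \<cdot> \<rho> Z" if h: "h \<in> hom C Z Q" "q1 \<cdot> h = a" "q2 \<cdot> h = b" for h
  proof -
    obtain g where g: "g \<in> Arr C" "dm g = R Z" "cd g = Q" "g \<cdot> \<rho> Z = h"
      using reflection_factor[OF \<rho>Z qq(3)] h(1) Z by (auto simp: hom_iff)
    have "(q1 \<cdot> g) \<cdot> \<rho> Z = a' \<cdot> \<rho> Z" using g h qq a' Z by simp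
    then have "q1 \<cdot> g = a'" by (rule reflection_ext[OF \<rho>Z qq(1), rotated -1]) (use g qq a' Z in simp_all)
    moreover have "(q2 \<cdot> g) \<cdot> \<rho> Z = b' \<cdot> \<rho> Z" using g h qq b' Z by simp
    then have "q2 \<cdot> g = b'" by (rule reflection_ext[OF \<rho>Z qq(2), rotated -1]) (use g qq b' Z in simp_all)
    ultimately have "g = h'" using h'_unique g by (auto simp: hom_iff)
    then show ?thesis using g(4) by simp
  qed
  ultimately show "\<exists>!h. h \<in> hom C Z Q \<and> q1 \<cdot> h = a \<and> q2 \<cdot> h = b" by blast
qed

end

section \<open>Factorization systems and least subobjects\<close>

lemma factorization_system_arrs:
  "factorization_system C S E M \<Longrightarrow> E \<subseteq> arrs C S \<and> M \<subseteq> arrs C S"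
  unfolding factorization_system_def by (elim conjE) (rule conjI; assumption)

lemma factorization_system_E_comp_iso:
  "factorization_system C S E M \<Longrightarrow>
     \<forall>e\<in>E. \<forall>i\<in>arrs C S. is_iso C i \<and> Dom C i = Cod C e \<longrightarrow> Comp C i e \<in> E"
  unfolding factorization_system_def by (elim conjE) assumption

lemma factorization_system_M_comp_iso:
  "factorization_system C S E M \<Longrightarrow>
     \<forall>m\<in>M. \<forall>i\<in>arrs C S. is_iso C i \<and> Cod C i = Dom C m \<longrightarrow> Comp C m i \<in> M"
  unfolding factorization_system_def by (elim conjE) assumption

lemma factorization_system_iso_comp_M:
  "factorization_system C S E M \<Longrightarrow>
     \<forall>m\<in>M. \<forall>i\<in>arrs C S. is_iso C i \<and> Dom C i = Cod C m \<longrightarrow> Comp C i m \<in> M"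
  unfolding factorization_system_def by (elim conjE) assumption

lemma factorization_system_factor:
  "factorization_system C S E M \<Longrightarrow>
     \<forall>f\<in>arrs C S. \<exists>e\<in>E. \<exists>m\<in>M. Cod C e = Dom C m \<and> f = Comp C m e"
  unfolding factorization_system_def by (elim conjE) assumption

lemma factorization_system_diagonal:
  "factorization_system C S E M \<Longrightarrow>
     \<forall>e\<in>E. \<forall>m\<in>M. \<forall>u\<in>arrs C S. \<forall>v\<in>arrs C S.
        Dom C u = Dom C e \<and> Cod C u = Dom C m \<and> Dom C v = Cod C e \<and> Cod C v = Cod C m \<and>
        Comp C v e = Comp C m u \<longrightarrow>
        (\<exists>!d. d \<in> hom C (Cod C e) (Dom C m) \<and> Comp C d e = u \<and> Comp C m d = v)"
  unfolding factorization_system_def by (elim conjE) assumption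

locale reflective_factorization = reflection +
  fixes E M F N
  assumes fcX: "finitely_complete C (Obj C)"
    and EM: "proper_factorization_system C (Obj C) E M"
    and FN: "proper_factorization_system C A F N"
    and E_stable: "pullback_stable C (Obj C) E"
    and N_eq: "N = {m \<in> M. Dom C m \<in> A \<and> Cod C m \<in> A}"
    and rho_E: "\<forall>Y\<in>Obj C. \<rho> Y \<in> E"
begin

lemma EM_fs: "factorization_system C (Obj C) E M"
  using EM unfolding proper_factorization_system_def by blast

lemma FN_fs: "factorization_system C A F N"
  using FN unfolding proper_factorization_system_def by blast

lemma E_arr: "e \<in> E \<Longrightarrow> e \<in> Arr C"
  using factorization_system_arrs[OF EM_fs] by auto

lemma M_arr: "m \<in> M \<Longrightarrow> m \<in> Arr C"
  using factorization_system_arrs[OF EM_fs] by auto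

lemma F_arrs: "e \<in> F \<Longrightarrow> e \<in> Arr C \<and> dm e \<in> A \<and> cd e \<in> A"
  using factorization_system_arrs[OF FN_fs] unfolding arrs_def by auto

lemma N_arrs: "n \<in> N \<Longrightarrow> n \<in> Arr C \<and> dm n \<in> A \<and> cd n \<in> A"
  using factorization_system_arrs[OF FN_fs] unfolding arrs_def by auto

lemma N_sub_M: "N \<subseteq> M"
  using N_eq by auto

lemma M_sub_Arr: "M \<subseteq> Arr C"
  using M_arr by blast

lemma N_sub_Arr: "N \<subseteq> Arr C"
  using N_arrs by blast

lemma N_iff: "n \<in> N \<longleftrightarrow> n \<in> M \<and> dm n \<in> A \<and> cd n \<in> A"
  using N_eq by auto

lemma E_comp_iso:
  assumes "e \<in> E" "is_iso C i" "dm i = cd e"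
  shows "i \<cdot> e \<in> E"
  using factorization_system_E_comp_iso[OF EM_fs] assms iso_arr[OF assms(2)] arrs_Obj by blast

lemma M_comp_iso:
  assumes "m \<in> M" "is_iso C i" "cd i = dm m"
  shows "m \<cdot> i \<in> M"
  using factorization_system_M_comp_iso[OF EM_fs] assms iso_arr[OF assms(2)] arrs_Obj by blast

lemma iso_comp_N:
  assumes "n \<in> N" "is_iso C i" "dm i = cd n" "cd i \<in> A"
  shows "i \<cdot> n \<in> N"
proof -
  have n: "n \<in> M" "n \<in> Arr C" "dm n \<in> A" using assms(1) N_iff N_arrs by blast+
  have i: "i \<in> Arr C" using iso_arr assms(2) by blast
  have "i \<cdot> n \<in> M" using factorization_system_iso_comp_M[OF EM_fs] n(1) i assms(2,3) arrs_Obj by blast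
  moreover have "dm (i \<cdot> n) \<in> A" "cd (i \<cdot> n) \<in> A" using n i assms(3,4) by simp_all
  ultimately show ?thesis using N_iff by blast
qed

lemma factor_EM: "f \<in> Arr C \<Longrightarrow> \<exists>e m. e \<in> E \<and> m \<in> M \<and> cd e = dm m \<and> f = m \<cdot> e"
  using factorization_system_factor[OF EM_fs] unfolding arrs_Obj by blast

lemma factor_FN: "f \<in> Arr C \<Longrightarrow> dm f \<in> A \<Longrightarrow> cd f \<in> A \<Longrightarrow> \<exists>e m. e \<in> F \<and> m \<in> N \<and> cd e = dm m \<and> f = m \<cdot> e"
  using factorization_system_factor[OF FN_fs] unfolding arrs_def by blast

lemma diagonal_EM:
  assumes "e \<in> E" "m \<in> M" "a \<in> Arr C" "b \<in> Arr C" "dm a = cd e" "cd a = cd m" "dm b = dm e" "cd b = dm m"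
    "a \<cdot> e = m \<cdot> b"
  obtains d where "d \<in> Arr C" "dm d = cd e" "cd d = dm m" "d \<cdot> e = b" "m \<cdot> d = a"
proof -
  have "\<exists>!d. d \<in> hom C (cd e) (dm m) \<and> d \<cdot> e = b \<and> m \<cdot> d = a"
    using factorization_system_diagonal[OF EM_fs] assms by simp
  then show ?thesis using that by (auto simp: hom_iff)
qed

lemma diagonal_FN:
  assumes "e \<in> F" "m \<in> N" "a \<in> Arr C" "b \<in> Arr C" "dm a = cd e" "cd a = cd m" "dm b = dm e" "cd b = dm m"
    "a \<cdot> e = m \<cdot> b"
  obtains d where "d \<in> Arr C" "dm d = cd e" "cd d = dm m" "d \<cdot> e = b" "m \<cdot> d = a"
proof -
  have "a \<in> arrs C A" "b \<in> arrs C A" using assms F_arrs N_arrs unfolding arrs_def by auto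
  then have "\<exists>!d. d \<in> hom C (cd e) (dm m) \<and> d \<cdot> e = b \<and> m \<cdot> d = a"
    using factorization_system_diagonal[OF FN_fs] assms by simp
  then show ?thesis using that by (auto simp: hom_iff)
qed

lemma M_mono:
  assumes "m \<in> M" "g \<in> Arr C" "h \<in> Arr C" "cd g = dm m" "cd h = dm m" "dm g = dm h" "m \<cdot> g = m \<cdot> h"
  shows "g = h"
proof -
  have "is_mono C (Obj C) m" using EM assms(1) unfolding proper_factorization_system_def by blast
  then show ?thesis using assms unfolding is_mono_def arrs_Obj by blast
qed

lemma M_split_epi_iso:
  assumes "m \<in> M" "d \<in> Arr C" "dm d = cd m" "cd d = dm m" "m \<cdot> d = Id C (cd m)"
  shows "is_iso C m"
proof -
  have m: "m \<in> Arr C" "dm m \<in> Obj C" using M_arr[OF assms(1)] dom_cod_obj by auto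
  have "m \<cdot> (d \<cdot> m) = (m \<cdot> d) \<cdot> m" by (rule comp_assoc_sym) (use m assms in simp_all)
  also have "\<dots> = m \<cdot> Id C (dm m)" using m assms(5) by simp
  finally have eq: "m \<cdot> (d \<cdot> m) = m \<cdot> Id C (dm m)" .
  have "d \<cdot> m = Id C (dm m)" by (rule M_mono[OF assms(1) _ _ _ _ _ eq]) (use m assms in simp_all)
  then show ?thesis using isoI[of m d] m assms by simp
qed

lemma sub_le_cancel_E:
  assumes "e \<in> E" "n \<in> M" "h \<in> Arr C" "cd e = dm h" "h \<cdot> e \<sqsubseteq> n"
  shows "h \<sqsubseteq> n"
proof -
  have n: "n \<in> Arr C" and e: "e \<in> Arr C" using assms M_arr E_arr by auto
  obtain j where j: "j \<in> Arr C" "cd j = dm n" "h \<cdot> e = n \<cdot> j" using assms(5) n sub_le_iff_factor by blast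
  have "dm (n \<cdot> j) = dm j" "cd (n \<cdot> j) = cd n" using j n by simp_all
  moreover have "dm (h \<cdot> e) = dm e" "cd (h \<cdot> e) = cd h" using e assms(3,4) by simp_all
  ultimately have je: "dm j = dm e" "cd h = cd n" using j(3) by metis+
  obtain d where "d \<in> Arr C" "cd d = dm n" "n \<cdot> d = h"
    by (rule diagonal_EM[OF assms(1,2,3) j(1) _ _ _ _ j(3)]) (use j je assms in auto)
  then show ?thesis using sub_le_compI[OF n] by metis
qed

lemma reflection_arrow_in_E:
  assumes "is_reflection_arrow C A u"
  shows "u \<in> E"
proof -
  have o: "dm u \<in> Obj C" using dom_cod_obj reflection_arrow_parts[OF assms] by blast
  obtain i where "is_iso C i" "dm i = cd (\<rho> (dm u))" "i \<cdot> \<rho> (dm u) = u"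
    using reflection_arrows_iso[OF assms rho_reflection[OF o]] o by auto
  then show ?thesis using E_comp_iso rho_E o by metis
qed

lemma M_into_A_factors_through_N:
  assumes "m \<in> M" "cd m \<in> A"
  obtains m' where "m' \<in> N" "dm m' = R (dm m)" "cd m' = cd m" "m' \<cdot> \<rho> (dm m) = m"
    "is_iso C (\<rho> (dm m))"
proof -
  define Z where "Z = dm m"
  have m: "m \<in> Arr C" "Z \<in> Obj C" "R Z \<in> Obj C" using M_arr[OF assms(1)] dom_cod_obj Z_def R_in_A A_sub_Obj by auto
  obtain m' where m': "m' \<in> Arr C" "dm m' = R Z" "cd m' = cd m" "m' \<cdot> \<rho> Z = m"
    by (rule reflection_factor[OF rho_reflection[OF m(2)] assms(2) m(1)]) (use m Z_def in auto)
  have \<rho>Z: "\<rho> Z \<in> E" using rho_E m(2) by blast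
  obtain d where d: "d \<in> Arr C" "dm d = R Z" "cd d = Z" "d \<cdot> \<rho> Z = Id C Z" "m \<cdot> d = m'"
    by (rule diagonal_EM[OF \<rho>Z assms(1) m'(1) id_simps(1)[OF m(2)]]) (use m m' Z_def in simp_all)
  have "(\<rho> Z \<cdot> d) \<cdot> \<rho> Z = Id C (R Z) \<cdot> \<rho> Z" using d m by simp
  then have "\<rho> Z \<cdot> d = Id C (R Z)"
    by (rule reflection_ext[OF rho_reflection[OF m(2)] R_in_A[OF m(2)], rotated -1])
      (use d m in auto)
  then have "is_iso C d" "is_iso C (\<rho> Z)" using d m isoI[of d "\<rho> Z"] isoI[of "\<rho> Z" d] by simp_all
  moreover have "m' \<in> N" using M_comp_iso[OF assms(1) \<open>is_iso C d\<close>] d m' R_in_A[OF m(2)] assms(2) N_iff Z_def by auto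
  ultimately show ?thesis using that m' unfolding Z_def by blast
qed

text \<open>Write \<open>f = m' \<cdot> e'\<close> with \<open>m' \<in> N\<close> and \<open>e' \<in> E\<close>; the \<open>(F,N)\<close>-diagonal makes \<open>m'\<close> a split
  epimorphism, hence an isomorphism.\<close>

lemma F_sub_E: "F \<subseteq> E"
proof
  fix f assume f: "f \<in> F"
  have fa: "f \<in> Arr C" "dm f \<in> A" "cd f \<in> A" "cd f \<in> Obj C" using F_arrs f A_sub_Obj by auto
  obtain e m where em: "e \<in> E" "m \<in> M" "cd e = dm m" "f = m \<cdot> e" using factor_EM fa by blast
  have ea: "e \<in> Arr C" "m \<in> Arr C" "cd m = cd f" "dm e = dm f" "dm m \<in> Obj C"
    using em E_arr M_arr dom_cod_obj by auto
  obtain m' where m': "m' \<in> N" "dm m' = R (dm m)" "cd m' = cd f" "m' \<cdot> \<rho> (dm m) = m"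
      and iso: "is_iso C (\<rho> (dm m))"
    by (rule M_into_A_factors_through_N[OF em(2)]) (use ea fa in simp_all)
  have m'a: "m' \<in> Arr C" "m' \<in> M" using N_arrs N_sub_M m'(1) by auto
  define e' where "e' = \<rho> (dm m) \<cdot> e"
  have e': "e' \<in> E" "e' \<in> Arr C" "dm e' = dm f" "cd e' = R (dm m)"
    using E_comp_iso[OF em(1) iso] em(3) ea unfolding e'_def by simp_all
  have "f = (m' \<cdot> \<rho> (dm m)) \<cdot> e" using em(4) m'(4) by simp
  also have "\<dots> = m' \<cdot> e'" unfolding e'_def by (rule comp_assoc) (use em ea m' m'a in simp_all)
  finally have f_eq: "f = m' \<cdot> e'" .
  then have sq: "Id C (cd f) \<cdot> f = m' \<cdot> e'" using fa by simp
  obtain d where "d \<in> Arr C" "dm d = cd f" "cd d = dm m'" "m' \<cdot> d = Id C (cd f)"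
    by (rule diagonal_FN[OF f m'(1) _ _ _ _ _ _ sq]) (use fa e' m' m'a in simp_all)
  then have "is_iso C m'" using M_split_epi_iso[OF m'a(2)] m'(3) by simp
  then show "f \<in> E" using E_comp_iso[OF e'(1)] e'(4) m'(2) f_eq by simp
qed

lemma least_sub_comp_E:
  assumes "least_sub K h k" "K \<subseteq> M" "e \<in> E" "h \<in> Arr C" "cd e = dm h"
  shows "least_sub K (h \<cdot> e) k"
proof -
  have e: "e \<in> Arr C" and k: "k \<in> Arr C" using assms E_arr M_arr unfolding least_sub_def by auto
  have "h \<cdot> e \<sqsubseteq> k" using assms e k sub_le_comp_right unfolding least_sub_def by blast
  moreover have "k \<sqsubseteq> n" if n: "n \<in> K" "cd n = cd (h \<cdot> e)" "h \<cdot> e \<sqsubseteq> n" for n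
  proof -
    have "h \<sqsubseteq> n" using sub_le_cancel_E[OF assms(3) _ assms(4,5) n(3)] n(1) assms(2) by blast
    then show ?thesis using assms(1) n e assms(4,5) unfolding least_sub_def by auto
  qed
  ultimately show ?thesis using assms e unfolding least_sub_def by auto
qed

lemma image_EM:
  assumes "f \<in> Arr C" "m \<in> Arr C" "cd m = dm f"
  obtains e where "image C E M f m \<in> M" "cd (image C E M f m) = cd f" "e \<in> E" "dm e = dm m"
    "cd e = dm (image C E M f m)" "f \<cdot> m = image C E M f m \<cdot> e"
proof -
  obtain e n where en: "e \<in> E" "n \<in> M" "cd e = dm n" "f \<cdot> m = n \<cdot> e"
    using factor_EM assms by (metis comp_simps(1))
  have "dm (f \<cdot> m) = dm m" "cd (f \<cdot> m) = cd f" using assms by simp_all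
  moreover have "dm (n \<cdot> e) = dm e" "cd (n \<cdot> e) = cd n" using en(1-3) E_arr M_arr by simp_all
  ultimately have "is_image C E M f m n" unfolding is_image_def using en by metis
  then have "is_image C E M f m (image C E M f m)" unfolding image_def by (rule someI)
  then show ?thesis using that unfolding is_image_def by blast
qed

lemma image_FN:
  assumes "f \<in> Arr C" "k \<in> Arr C" "cd k = dm f" "dm k \<in> A" "cd f \<in> A"
  obtains e where "image C F N f k \<in> N" "cd (image C F N f k) = cd f" "e \<in> F" "dm e = dm k"
    "cd e = dm (image C F N f k)" "f \<cdot> k = image C F N f k \<cdot> e"
proof -
  have "\<exists>e n. e \<in> F \<and> n \<in> N \<and> cd e = dm n \<and> f \<cdot> k = n \<cdot> e"
    using factor_FN[of "f \<cdot> k"] assms by simp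
  then obtain e n where en: "e \<in> F" "n \<in> N" "cd e = dm n" "f \<cdot> k = n \<cdot> e" by blast
  have "dm (f \<cdot> k) = dm k" "cd (f \<cdot> k) = cd f" using assms by simp_all
  moreover have "dm (n \<cdot> e) = dm e" "cd (n \<cdot> e) = cd n" using en(1-3) F_arrs N_arrs by simp_all
  ultimately have "is_image C F N f k n" unfolding is_image_def using en by metis
  then have "is_image C F N f k (image C F N f k)" unfolding image_def by (rule someI)
  then show ?thesis using that unfolding is_image_def by blast
qed

lemma least_sub_image_EM:
  assumes "f \<in> Arr C" "m \<in> Arr C" "cd m = dm f"
  shows "least_sub M (f \<cdot> m) (image C E M f m)"
proof -
  obtain e where e: "image C E M f m \<in> M" "e \<in> E" "cd e = dm (image C E M f m)"
     "f \<cdot> m = image C E M f m \<cdot> e" using image_EM[OF assms] by metis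
  have "least_sub M (image C E M f m \<cdot> e) (image C E M f m)"
    using least_sub_comp_E[OF least_sub_self[OF e(1) M_sub_Arr] _ e(2)] e(1,3) M_arr by blast
  then show ?thesis using e(4) by simp
qed

lemma least_sub_image_FN:
  assumes "f \<in> Arr C" "k \<in> Arr C" "cd k = dm f" "dm k \<in> A" "cd f \<in> A"
  shows "least_sub N (f \<cdot> k) (image C F N f k)"
proof -
  obtain e where e: "image C F N f k \<in> N" "e \<in> F" "cd e = dm (image C F N f k)"
     "f \<cdot> k = image C F N f k \<cdot> e" using image_FN[OF assms] by metis
  have "least_sub N (image C F N f k \<cdot> e) (image C F N f k)"
    using least_sub_comp_E[OF least_sub_self[OF e(1) N_sub_Arr] N_sub_M] F_sub_E e N_arrs by blast
  then show ?thesis using e(4) by simp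
qed

lemma image_EM_sub_eq:
  assumes "f \<in> Arr C" "x \<simeq> x'" "x' \<in> Arr C" "cd x' = dm f"
  shows "image C E M f x \<simeq> image C E M f x'"
proof -
  have "x \<sqsubseteq> x'" using assms(2) unfolding sub_eq_iff by blast
  then have x: "x \<in> Arr C" "cd x = dm f" using sub_le_arr[OF _ assms(3)] assms(4) by auto
  have fx: "f \<cdot> x \<simeq> f \<cdot> x'" by (rule sub_eq_comp_left[OF assms(2,1,3,4)])
  have "least_sub M (f \<cdot> x') (image C E M f x)"
    by (rule least_sub_cong[OF least_sub_image_EM[OF assms(1) x] fx]) (use x assms M_sub_Arr in simp_all)
  moreover have "least_sub M (f \<cdot> x') (image C E M f x')" by (rule least_sub_image_EM[OF assms(1,3,4)])
  ultimately show ?thesis by (rule least_sub_unique)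
qed

lemma least_sub_N_parts:
  assumes "least_sub N h k"
  shows "k \<in> N" "k \<in> Arr C" "cd k = cd h" "dm k \<in> A" "cd h \<in> A"
proof -
  show k: "k \<in> N" "cd k = cd h" using assms unfolding least_sub_def by auto
  then show "k \<in> Arr C" "dm k \<in> A" "cd h \<in> A" using N_arrs by force+
qed

lemma least_sub_via_reflection:
  assumes "h \<in> Arr C" "cd h \<in> A"
  obtains h' k f0 where "h' \<in> Arr C" "dm h' = R (dm h)" "cd h' = cd h" "h' \<cdot> \<rho> (dm h) = h"
    "k \<in> N" "f0 \<in> F" "cd f0 = dm k" "h' = k \<cdot> f0" "least_sub N h k"
proof -
  define Z where "Z = dm h"
  have Z: "Z \<in> Obj C" "\<rho> Z \<in> E" using dom_cod_obj assms rho_E Z_def by auto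
  obtain h' where h': "h' \<in> Arr C" "dm h' = R Z" "cd h' = cd h" "h' \<cdot> \<rho> Z = h"
    by (rule reflection_factor[OF rho_reflection[OF Z(1)] assms(2) assms(1)]) (use Z Z_def in auto)
  obtain f0 k where kf: "f0 \<in> F" "k \<in> N" "cd f0 = dm k" "h' = k \<cdot> f0"
    using factor_FN[OF h'(1)] h'(2,3) assms(2) R_in_A[OF Z(1)] by auto
  have ka: "k \<in> Arr C" "f0 \<in> Arr C" using kf N_arrs F_arrs by auto
  have "least_sub N (k \<cdot> f0) k"
    using least_sub_comp_E[OF least_sub_self[OF kf(2) N_sub_Arr] N_sub_M] F_sub_E kf ka by blast
  then have "least_sub N ((k \<cdot> f0) \<cdot> \<rho> Z) k"
    by (rule least_sub_comp_E[OF _ N_sub_M Z(2)]) (use ka kf h'(2) Z(1) in simp_all)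
  then have "least_sub N h k" using h'(4) kf(4) by simp
  then show ?thesis using that h' kf unfolding Z_def by blast
qed

lemma least_sub_N_exists: "h \<in> Arr C \<Longrightarrow> cd h \<in> A \<Longrightarrow> \<exists>k. least_sub N h k"
  using least_sub_via_reflection by metis

lemma least_sub_cancel_E:
  assumes "least_sub N (h \<cdot> e) k" "e \<in> E" "h \<in> Arr C" "cd e = dm h" "cd h \<in> A"
  shows "least_sub N h k"
proof -
  obtain k' where k': "least_sub N h k'" using least_sub_N_exists assms by blast
  then have "least_sub N (h \<cdot> e) k'" using least_sub_comp_E[OF _ N_sub_M assms(2,3,4)] by blast
  then have "k' \<simeq> k" using least_sub_unique assms(1) by blast
  then show ?thesis using least_sub_sub_eq[OF k' _ _ N_sub_Arr] assms(1) unfolding least_sub_def by blast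
qed

lemma least_sub_comp_le:
  assumes "least_sub N h k" "h \<in> Arr C" "g \<in> Arr C" "dm g = cd h" "n \<in> N" "g \<cdot> h \<sqsubseteq> n"
  shows "g \<cdot> k \<sqsubseteq> n"
proof -
  note k = least_sub_N_parts[OF assms(1)]
  define Z where "Z = dm h"
  have Z: "Z \<in> Obj C" "\<rho> Z \<in> E" using dom_cod_obj assms(2) rho_E Z_def by auto
  obtain h' k' f0 where d: "h' \<in> Arr C" "dm h' = R Z" "cd h' = cd h" "h' \<cdot> \<rho> Z = h"
      "k' \<in> N" "f0 \<in> F" "cd f0 = dm k'" "h' = k' \<cdot> f0" "least_sub N h k'"
    using least_sub_via_reflection[OF assms(2) k(5)] unfolding Z_def by blast
  note k' = least_sub_N_parts[OF d(9)]
  have f0: "f0 \<in> Arr C" "f0 \<in> E" using F_arrs F_sub_E d(6) by auto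
  have "dm f0 = R Z" using d(2,7,8) k'(2) f0(1) by simp
  have n: "n \<in> M" "n \<in> Arr C" using assms(5) N_sub_M N_arrs by auto
  have gk': "g \<cdot> k' \<in> Arr C" "dm (g \<cdot> k') = dm k'" using k' assms(3,4) by simp_all
  have "((g \<cdot> k') \<cdot> f0) \<cdot> \<rho> Z = g \<cdot> h" using d k' f0 Z assms(3,4) by simp
  then have "((g \<cdot> k') \<cdot> f0) \<cdot> \<rho> Z \<sqsubseteq> n" using assms(6) by simp
  then have "(g \<cdot> k') \<cdot> f0 \<sqsubseteq> n"
    by (rule sub_le_cancel_E[OF Z(2) n(1), rotated -1]) (use gk' f0 \<open>dm f0 = R Z\<close> d(7) Z in simp_all)
  then have "g \<cdot> k' \<sqsubseteq> n" by (rule sub_le_cancel_E[OF f0(2) n(1), rotated -1]) (use gk' d(7) in simp_all)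
  moreover have "g \<cdot> k \<sqsubseteq> g \<cdot> k'"
    using sub_le_comp_left[OF _ assms(3) k'(2)] least_sub_unique[OF assms(1) d(9)] k' assms(4)
    unfolding sub_eq_iff by simp
  ultimately show ?thesis using sub_le_trans n(2) by blast
qed

lemma least_sub_image_comp:
  assumes "least_sub N h k" "h \<in> Arr C" "g \<in> Arr C" "dm g = cd h" "cd g \<in> A"
  shows "least_sub N (g \<cdot> h) (image C F N g k)"
proof -
  note k = least_sub_N_parts[OF assms(1)]
  let ?I = "image C F N g k"
  have I: "least_sub N (g \<cdot> k) ?I" using least_sub_image_FN[OF assms(3) k(2)] k assms(4,5) by simp
  have I': "?I \<in> N" "?I \<in> Arr C" "cd ?I = cd g" using least_sub_N_parts[OF I] assms(3,4) k by simp_all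
  have "h \<sqsubseteq> k" using assms(1) unfolding least_sub_def by blast
  then have "g \<cdot> h \<sqsubseteq> g \<cdot> k" using sub_le_comp_left[OF _ assms(3) k(2)] k assms(4) by simp
  moreover have "g \<cdot> k \<sqsubseteq> ?I" using I unfolding least_sub_def by blast
  ultimately have "g \<cdot> h \<sqsubseteq> ?I" using sub_le_trans I'(2) by blast
  moreover have "?I \<sqsubseteq> n" if "n \<in> N" "cd n = cd (g \<cdot> h)" "g \<cdot> h \<sqsubseteq> n" for n
  proof -
    have "g \<cdot> k \<sqsubseteq> n" using least_sub_comp_le[OF assms(1-4) that(1,3)] .
    moreover have "cd n = cd (g \<cdot> k)" using that(2) k assms(2,3,4) by simp
    ultimately show ?thesis using I that(1) unfolding least_sub_def by blast
  qed
  ultimately show ?thesis using I' assms(2,3,4) unfolding least_sub_def by simp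
qed

lemma image_FN_iso:
  assumes "is_iso C i" "cd i \<in> A" "x \<in> N" "cd x = dm i"
  shows "image C F N i x \<simeq> i \<cdot> x"
proof -
  have i: "i \<in> Arr C" using iso_arr assms by blast
  have x: "x \<in> Arr C" "dm x \<in> A" using N_arrs assms by auto
  have "least_sub N (i \<cdot> x) (image C F N i x)" using least_sub_image_FN[OF i x(1) assms(4) x(2) assms(2)] .
  moreover have "least_sub N (i \<cdot> x) (i \<cdot> x)"
    using least_sub_self[OF iso_comp_N[OF assms(3,1)] N_sub_Arr] assms by simp
  ultimately show ?thesis using least_sub_unique by blast
qed

lemma least_sub_iso_comp:
  assumes "least_sub N h k" "h \<in> Arr C" "is_iso C i" "dm i = cd h" "cd i \<in> A"
  shows "least_sub N (i \<cdot> h) (i \<cdot> k)"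
proof -
  note k = least_sub_N_parts[OF assms(1)]
  have "least_sub N (i \<cdot> h) (image C F N i k)"
    using least_sub_image_comp[OF assms(1,2) iso_arr[OF assms(3)] assms(4,5)] .
  moreover have "image C F N i k \<simeq> i \<cdot> k" using image_FN_iso[OF assms(3,5) k(1)] k assms(4) by simp
  ultimately show ?thesis
    using least_sub_sub_eq[OF _ _ iso_comp_N[OF k(1) assms(3)] N_sub_Arr] k assms(4,5) by simp
qed

lemma pullback_E: "pb a e P p q \<Longrightarrow> e \<in> E \<Longrightarrow> p \<in> E"
  using E_stable unfolding pullback_stable_def by blast

lemma pullback_M:
  assumes "pb a n P p q" "n \<in> M"
  shows "p \<in> M"
proof -
  note pp = pullback_parts[OF assms(1)]
  obtain e1 m1 where em: "e1 \<in> E" "m1 \<in> M" "cd e1 = dm m1" "p = m1 \<cdot> e1" using factor_EM pp(5) by blast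
  have ea: "e1 \<in> Arr C" "m1 \<in> Arr C" using em E_arr M_arr by auto
  have t: "dm e1 = P" "cd m1 = dm a" using arg_cong[OF em(4), of dm] arg_cong[OF em(4), of cd] ea em(3) pp by auto
  have sq: "(a \<cdot> m1) \<cdot> e1 = n \<cdot> q"
  proof -
    have "(a \<cdot> m1) \<cdot> e1 = a \<cdot> p" unfolding em(4) using ea em(3) t pp by simp
    then show ?thesis using pp(11) by simp
  qed
  obtain d where d: "d \<in> Arr C" "dm d = cd e1" "cd d = dm n" "d \<cdot> e1 = q" "n \<cdot> d = a \<cdot> m1"
    by (rule diagonal_EM[OF em(1) assms(2) _ pp(8) _ _ _ _ sq]) (use ea t pp em(3) in simp_all)
  obtain h where h: "h \<in> Arr C" "dm h = dm m1" "cd h = P" "p \<cdot> h = m1" "q \<cdot> h = d"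
    by (rule pullback_lift[OF assms(1) ea(2) d(1) _ t(2) d(3) d(5)[symmetric]]) (use d(2) em(3) in simp_all)
  have "h \<cdot> e1 = Id C P"
  proof (rule pullback_lift_unique[OF assms(1)])
    show "h \<cdot> e1 \<in> Arr C" "Id C P \<in> Arr C" "dm (h \<cdot> e1) = dm (Id C P)" "cd (h \<cdot> e1) = P" "cd (Id C P) = P"
      using h ea em(3) t pp by auto
    have "p \<cdot> (h \<cdot> e1) = (p \<cdot> h) \<cdot> e1" by (rule comp_assoc_sym) (use h ea em(3) pp in simp_all)
    then show "p \<cdot> (h \<cdot> e1) = p \<cdot> Id C P" unfolding h(4) using em(4) pp by simp
    have "q \<cdot> (h \<cdot> e1) = (q \<cdot> h) \<cdot> e1" by (rule comp_assoc_sym) (use h ea em(3) pp in simp_all)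
    then show "q \<cdot> (h \<cdot> e1) = q \<cdot> Id C P" unfolding h(5) d(4) using pp by simp
  qed
  moreover have "e1 \<cdot> h = Id C (dm m1)"
  proof (rule M_mono[OF em(2)])
    show "e1 \<cdot> h \<in> Arr C" "Id C (dm m1) \<in> Arr C" "cd (e1 \<cdot> h) = dm m1" "cd (Id C (dm m1)) = dm m1"
      "dm (e1 \<cdot> h) = dm (Id C (dm m1))" using h ea em(3) t dom_cod_obj by auto
    have "m1 \<cdot> (e1 \<cdot> h) = (m1 \<cdot> e1) \<cdot> h" by (rule comp_assoc_sym) (use h ea em(3) t in simp_all)
    then show "m1 \<cdot> (e1 \<cdot> h) = m1 \<cdot> Id C (dm m1)" unfolding em(4)[symmetric] h(4) using ea by simp
  qed
  ultimately have "is_iso C e1" using isoI[of e1 h] ea h em(3) t by auto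
  then show ?thesis using M_comp_iso[OF em(2)] em(3,4) by auto
qed

text \<open>Stability of \<open>E\<close> under pullback puts the other projection in \<open>E\<close>.\<close>

lemma least_sub_pullback:
  assumes "u \<in> E" "k \<in> N" "pb u k P l t"
  shows "least_sub N (u \<cdot> l) k"
proof -
  note pp = pullback_parts[OF assms(3)]
  have "t \<in> E" using pullback_E[OF pullback_sym[OF assms(3)] assms(1)] .
  then have "least_sub N (k \<cdot> t) k" using least_sub_comp_E[OF least_sub_self[OF assms(2) N_sub_Arr] N_sub_M] pp by blast
  then show ?thesis using pp(11) by simp
qed

lemma image_pullback_le:
  assumes f: "f \<in> Arr C" "dm f = dm u" "cd f = dm v" and u: "u \<in> Arr C" "cd u = dm g"
    and v: "v \<in> Arr C" and g: "g \<in> Arr C" "cd g = cd v" "cd g \<in> A" and sq: "g \<cdot> u = v \<cdot> f"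
    and k: "k \<in> N" and pb1: "pb u k P1 l1 t1" and pb2: "pb v (image C F N g k) P2 w t2"
  shows "image C E M f l1 \<sqsubseteq> w"
proof -
  note p1 = pullback_parts[OF pb1] and p2 = pullback_parts[OF pb2]
  have ka: "k \<in> Arr C" "dm k \<in> A" using N_arrs k by auto
  let ?I = "image C F N g k"
  obtain e where I: "?I \<in> N" "e \<in> F" "dm e = dm k" "cd e = dm ?I" "g \<cdot> k = ?I \<cdot> e"
    using image_FN[OF g(1) ka(1)] p1(3) u g ka by metis
  have Ia: "?I \<in> Arr C" "e \<in> Arr C" using I N_arrs F_arrs by auto
  have "v \<cdot> (f \<cdot> l1) = g \<cdot> (u \<cdot> l1)" by (rule comp_eq_extend[OF sq[symmetric]]) (use f u v g p1 in simp_all)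
  also have "\<dots> = g \<cdot> (k \<cdot> t1)" using p1(11) by simp
  also have "\<dots> = ?I \<cdot> (e \<cdot> t1)" by (rule comp_eq_extend[OF I(5)]) (use g u ka Ia I p1 in simp_all)
  finally have eq: "v \<cdot> (f \<cdot> l1) = ?I \<cdot> (e \<cdot> t1)" .
  have "f \<cdot> l1 \<sqsubseteq> w" by (rule pullback_sub_le[OF pb2 _ _ _ _ _ eq]) (use f p1 Ia I ka in simp_all)
  moreover have "w \<in> M" using pullback_M[OF pb2] I(1) N_sub_M by blast
  moreover have "cd w = cd (f \<cdot> l1)" using p2 p1 f by simp
  moreover have "least_sub M (f \<cdot> l1) (image C E M f l1)"
    by (rule least_sub_image_EM[OF f(1) p1(5)]) (use p1 f in simp)
  ultimately show ?thesis unfolding least_sub_def by blast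
qed

text \<open>The converse inclusion for the product square: \<open>w\<close> is covered, via two pullbacks of \<open>E\<close>-arrows
  (the second one of \<open>\<rho> X\<close>), by an arrow factoring through \<open>p2 \<cdot> l1\<close>.\<close>

lemma pullback_product_E_cover:
  assumes X: "X \<in> Obj C" and PP: "is_product C (Obj C) X Y P p1 p2" and QQ: "is_product C A (R X) B Q q1 q2"
    and v: "v \<in> Arr C" "dm v = Y" "cd v = B" and u: "u \<in> Arr C" "dm u = P" "cd u = Q"
    and eu1: "q1 \<cdot> u = \<rho> X \<cdot> p1" and eu2: "q2 \<cdot> u = v \<cdot> p2"
    and k: "k \<in> N" "cd k = Q" and pb1: "pb u k P1 l1 t1" and pb2: "pb v (image C F N q2 k) P2 w t2"
  obtains s s' h where "s \<in> E" "s \<in> Arr C" "cd s = P2" "s' \<in> E" "s' \<in> Arr C" "cd s' = dm s"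
    "h \<in> Arr C" "dm h = dm s'" "cd h = P1" "w \<cdot> (s \<cdot> s') = p2 \<cdot> (l1 \<cdot> h)"
proof -
  note qq = product_parts[OF QQ] and p2' = pullback_parts[OF pb2]
  have ka: "k \<in> Arr C" "dm k \<in> A" using N_arrs k by auto
  let ?I = "image C F N q2 k"
  obtain e where I: "?I \<in> N" "e \<in> F" "dm e = dm k" "cd e = dm ?I" "q2 \<cdot> k = ?I \<cdot> e"
    using image_FN[OF qq(7) ka(1)] k qq ka by metis
  have Ia: "?I \<in> Arr C" "e \<in> Arr C" "e \<in> E" using I N_arrs F_arrs F_sub_E by auto
  obtain P3 s t' where pb3: "pb t2 e P3 s t'" using pullback_exists[OF fcX, of t2 e] p2' Ia I by auto
  note p3 = pullback_parts[OF pb3]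
  define x0 where "x0 = q1 \<cdot> (k \<cdot> t')"
  have x0a: "x0 \<in> Arr C" "dm x0 = P3" "cd x0 = R X" using x0_def qq p3 k ka I by auto
  obtain P4 s' x where pb4: "pb x0 (\<rho> X) P4 s' x" using pullback_exists[OF fcX, of x0 "\<rho> X"] x0a X by auto
  note p4 = pullback_parts[OF pb4]
  have ts: "t' \<cdot> s' \<in> Arr C" "dm (t' \<cdot> s') = P4" "cd (t' \<cdot> s') = dm k" using p3 p4 x0a I by auto
  have "q1 \<cdot> (k \<cdot> (t' \<cdot> s')) = x0 \<cdot> s'" unfolding x0_def using qq k ka p3 p4 I x0a by simp
  then have c1: "q1 \<cdot> (k \<cdot> (t' \<cdot> s')) = \<rho> X \<cdot> x" using p4(11) by simp
  have "q2 \<cdot> (k \<cdot> (t' \<cdot> s')) = ?I \<cdot> (e \<cdot> (t' \<cdot> s'))"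
    by (rule comp_eq_extend[OF I(5)]) (use qq k ka Ia I ts in simp_all)
  also have "e \<cdot> (t' \<cdot> s') = t2 \<cdot> (s \<cdot> s')" by (rule comp_eq_extend[OF p3(11)[symmetric]]) (use p3 p4 x0a in simp_all)
  also have "?I \<cdot> (t2 \<cdot> (s \<cdot> s')) = v \<cdot> (w \<cdot> (s \<cdot> s'))"
    by (rule comp_eq_extend[OF p2'(11)[symmetric]]) (use p2' p3 p4 x0a in simp_all)
  finally have c2: "q2 \<cdot> (k \<cdot> (t' \<cdot> s')) = v \<cdot> (w \<cdot> (s \<cdot> s'))" .
  obtain z where z: "z \<in> Arr C" "dm z = P4" "cd z = P" "p2 \<cdot> z = w \<cdot> (s \<cdot> s')" "u \<cdot> z = k \<cdot> (t' \<cdot> s')"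
    by (rule product_arrow_pair[OF PP product_in_A_is_product[OF QQ] u _ _ v(1,2) eu1 eu2 p4(8) _ _ _ _ _ _ _ c1 c2])
      (use X p4 p3 p2' x0a v ts k ka in simp_all)
  obtain h where h: "h \<in> Arr C" "dm h = dm z" "cd h = P1" "l1 \<cdot> h = z"
    by (rule pullback_lift[OF pb1 z(1) ts(1) _ _ _ z(5)]) (use z ts u in simp_all)
  have eq: "w \<cdot> (s \<cdot> s') = p2 \<cdot> (l1 \<cdot> h)" using z(4) h(4) by simp
  have sE: "s \<in> E" "s' \<in> E" using pullback_E[OF pb3 Ia(3)] pullback_E[OF pb4] rho_E X by auto
  show ?thesis by (rule that[OF sE(1) _ _ sE(2) _ _ h(1) _ h(3) eq]) (use p2' p3 p4 h z x0a in simp_all)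
qed

lemma pullback_image_le_product:
  assumes X: "X \<in> Obj C" and PP: "is_product C (Obj C) X Y P p1 p2" and QQ: "is_product C A (R X) B Q q1 q2"
    and v: "v \<in> Arr C" "dm v = Y" "cd v = B" and u: "u \<in> Arr C" "dm u = P" "cd u = Q"
    and eu1: "q1 \<cdot> u = \<rho> X \<cdot> p1" and eu2: "q2 \<cdot> u = v \<cdot> p2"
    and k: "k \<in> N" "cd k = Q" and pb1: "pb u k P1 l1 t1" and pb2: "pb v (image C F N q2 k) P2 w t2"
  shows "w \<sqsubseteq> image C E M p2 l1"
proof -
  note pp = product_parts[OF PP] and p1 = pullback_parts[OF pb1] and p2 = pullback_parts[OF pb2]
  obtain s s' h where s: "s \<in> E" "s \<in> Arr C" "cd s = P2" "s' \<in> E" "s' \<in> Arr C" "cd s' = dm s"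
      and h: "h \<in> Arr C" "dm h = dm s'" "cd h = P1" and eq: "w \<cdot> (s \<cdot> s') = p2 \<cdot> (l1 \<cdot> h)"
    using pullback_product_E_cover[OF assms] by blast
  let ?a = "image C E M p2 l1"
  obtain e where a: "?a \<in> M" "?a \<in> Arr C" "e \<in> E" "e \<in> Arr C" "dm e = dm l1" "cd e = dm ?a" "p2 \<cdot> l1 = ?a \<cdot> e"
    using image_EM[OF pp(7) p1(5)] p1 pp u M_arr E_arr by metis
  have w: "w \<in> Arr C" "dm w = P2" using p2 by auto
  have "(w \<cdot> s) \<cdot> s' = ?a \<cdot> (e \<cdot> h)"
    using eq comp_eq_extend[OF a(7) pp(7) p1(5) a(2,4) h(1)] w s h p1 pp u a by simp
  then have "(w \<cdot> s) \<cdot> s' \<sqsubseteq> ?a" using sub_le_compI[OF a(2), of "e \<cdot> h"] a h p1 by simp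
  then have "w \<cdot> s \<sqsubseteq> ?a" by (rule sub_le_cancel_E[OF s(4) a(1), rotated -1]) (use w s in simp_all)
  then show ?thesis by (rule sub_le_cancel_E[OF s(1) a(1), rotated -1]) (use w s in simp_all)
qed

lemma beck_chevalley_product:
  assumes X: "X \<in> Obj C" and PP: "is_product C (Obj C) X Y P p1 p2" and QQ: "is_product C A (R X) B Q q1 q2"
    and v: "v \<in> Arr C" "dm v = Y" "cd v = B" and u: "u \<in> Arr C" "dm u = P" "cd u = Q"
    and eu1: "q1 \<cdot> u = \<rho> X \<cdot> p1" and eu2: "q2 \<cdot> u = v \<cdot> p2"
    and k: "k \<in> N" "cd k = Q" and pb1: "pb u k P1 l1 t1" and pb2: "pb v (image C F N q2 k) P2 w t2"
  shows "image C E M p2 l1 \<simeq> w"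
proof -
  note pp = product_parts[OF PP] and qq = product_parts[OF QQ]
  have "image C E M p2 l1 \<sqsubseteq> w"
    by (rule image_pullback_le[OF pp(7) _ _ u(1) _ v(1) qq(7) _ _ eu2 k(1) pb1 pb2]) (use pp qq u v in simp_all)
  then show ?thesis using pullback_image_le_product[OF assms] unfolding sub_eq_iff by blast
qed

lemma least_sub_rho_comp:
  assumes "m \<in> Arr C"
  shows "least_sub N (\<rho> (cd m) \<cdot> m) (image C F N (Rmor C R \<rho> m) (Id C (R (dm m))))"
proof -
  note Rm = Rmor_props[OF assms]
  have o: "dm m \<in> Obj C" "cd m \<in> Obj C" "R (dm m) \<in> A" "R (cd m) \<in> A" "R (dm m) \<in> Obj C"
    using dom_cod_obj assms R_in_A A_sub_Obj by auto
  have "least_sub N (Rmor C R \<rho> m \<cdot> Id C (R (dm m))) (image C F N (Rmor C R \<rho> m) (Id C (R (dm m))))"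
    by (rule least_sub_image_FN[OF Rm(1)]) (use Rm o in simp_all)
  then have "least_sub N (Rmor C R \<rho> m) (image C F N (Rmor C R \<rho> m) (Id C (R (dm m))))"
    using Rm(1,2) by simp
  then have "least_sub N (Rmor C R \<rho> m \<cdot> \<rho> (dm m)) (image C F N (Rmor C R \<rho> m) (Id C (R (dm m))))"
    by (rule least_sub_comp_E[OF _ N_sub_M _ Rm(1)]) (use rho_E Rm(2) o in simp_all)
  then show ?thesis using Rm(4) by simp
qed

end

section \<open>The lifted closure operator\<close>

locale lifted_closure = reflective_factorization +
  fixes c
  assumes closure: "closure_op C A F N c"
begin

abbreviation "c_lift \<equiv> lift_closure C A F N R \<rho> c"

lemma closure_N:
  assumes "B \<in> A" "k \<in> N" "cd k = B"
  shows "c B k \<in> N" "cd (c B k) = B" "k \<sqsubseteq> c B k"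
proof -
  have "k \<in> sub C N B" using assms unfolding sub_def by simp
  then have "c B k \<in> sub C N B \<and> k \<sqsubseteq> c B k" using closure assms(1) unfolding closure_op_def by blast
  then show "c B k \<in> N" "cd (c B k) = B" "k \<sqsubseteq> c B k" unfolding sub_def by auto
qed

lemma closure_sub_eq:
  assumes "B \<in> A" "k \<in> N" "cd k = B" "k' \<in> N" "cd k' = B" "k \<simeq> k'"
  shows "c B k \<simeq> c B k'"
proof -
  have "k \<in> sub C N B" "k' \<in> sub C N B" using assms unfolding sub_def by simp_all
  then show ?thesis using closure assms(1,6) unfolding closure_op_def sub_eq_iff by blast
qed

lemma closure_image_le:
  assumes "f \<in> Arr C" "dm f \<in> A" "cd f \<in> A" "k \<in> N" "cd k = dm f"
  shows "image C F N f (c (dm f) k) \<sqsubseteq> c (cd f) (image C F N f k)"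
proof -
  have "f \<in> arrs C A" "k \<in> sub C N (dm f)" using assms unfolding arrs_def sub_def by simp_all
  then show ?thesis using closure unfolding closure_op_def by blast
qed

lemma iso_comp_closure_le:
  assumes "is_iso C i" "dm i = Q1" "cd i = Q2" "Q1 \<in> A" "Q2 \<in> A" "k \<in> N" "cd k = Q1"
  shows "i \<cdot> c Q1 k \<sqsubseteq> c Q2 (i \<cdot> k)"
proof -
  have i: "i \<in> Arr C" using iso_arr assms by blast
  have k: "k \<in> Arr C" "dm k \<in> A" using N_arrs assms by auto
  note ck = closure_N[OF assms(4,6,7)]
  have ik: "i \<cdot> k \<in> N" "cd (i \<cdot> k) = Q2" using iso_comp_N[OF assms(6,1)] i k assms by auto
  have I: "image C F N i k \<in> N" "cd (image C F N i k) = Q2"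
    using image_FN[OF i k(1)] assms k by metis+
  have cI: "c Q2 (image C F N i k) \<in> Arr C" "c Q2 (i \<cdot> k) \<in> Arr C"
    using closure_N(1)[OF assms(5) I] closure_N(1)[OF assms(5) ik] N_arrs by auto
  have 1: "i \<cdot> c Q1 k \<sqsubseteq> image C F N i (c Q1 k)"
    using image_FN_iso[OF assms(1) _ ck(1)] assms ck unfolding sub_eq_iff by simp
  have 2: "image C F N i (c Q1 k) \<sqsubseteq> c Q2 (image C F N i k)"
    using closure_image_le[OF i _ _ assms(6)] assms by simp
  have 3: "c Q2 (image C F N i k) \<sqsubseteq> c Q2 (i \<cdot> k)"
    using closure_sub_eq[OF assms(5) I ik image_FN_iso[OF assms(1) _ assms(6)]] assms
    unfolding sub_eq_iff by simp
  show ?thesis using sub_le_trans[OF 1 sub_le_trans[OF 2 3 cI(2)] cI(2)] .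
qed

lemma closure_iso_comp:
  assumes "is_iso C i" "dm i = Q1" "cd i = Q2" "Q1 \<in> A" "Q2 \<in> A" "k \<in> N" "cd k = Q1"
  shows "c Q2 (i \<cdot> k) \<simeq> i \<cdot> c Q1 k"
proof -
  obtain j where j: "i \<in> Arr C" "is_iso C j" "j \<in> Arr C" "dm j = Q2" "cd j = Q1"
      "j \<cdot> i = Id C Q1" "i \<cdot> j = Id C Q2"
    using iso_inverse[OF assms(1)] assms(2,3) by metis
  have k: "k \<in> Arr C" using N_arrs assms by blast
  have ik: "i \<cdot> k \<in> N" "cd (i \<cdot> k) = Q2" using iso_comp_N[OF assms(6,1)] j k assms by auto
  note cik = closure_N[OF assms(5) ik] and ck = closure_N[OF assms(4,6,7)]
  have ciks: "c Q2 (i \<cdot> k) \<in> Arr C" "c Q1 k \<in> Arr C" using cik ck N_arrs by auto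
  have "j \<cdot> (i \<cdot> k) = (j \<cdot> i) \<cdot> k" by (rule comp_assoc_sym) (use j k assms in simp_all)
  then have "j \<cdot> (i \<cdot> k) = k" using j k assms by simp
  then have "j \<cdot> c Q2 (i \<cdot> k) \<sqsubseteq> c Q1 k"
    using iso_comp_closure_le[OF j(2,4,5) assms(5,4) ik] by simp
  then have "i \<cdot> (j \<cdot> c Q2 (i \<cdot> k)) \<sqsubseteq> i \<cdot> c Q1 k"
    using sub_le_comp_left[OF _ j(1) ciks(2)] ck assms by simp
  moreover have "i \<cdot> (j \<cdot> c Q2 (i \<cdot> k)) = (i \<cdot> j) \<cdot> c Q2 (i \<cdot> k)"
    by (rule comp_assoc_sym) (use j ciks cik assms(2) in simp_all)
  ultimately have "c Q2 (i \<cdot> k) \<sqsubseteq> i \<cdot> c Q1 k" using j ciks cik assms(2) by simp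
  then show ?thesis using iso_comp_closure_le[OF assms] unfolding sub_eq_iff by blast
qed

lemma lift_closure_arr:
  assumes "m \<in> M"
  shows "c_lift (cd m) m \<in> Arr C" "cd (c_lift (cd m) m) = cd m"
proof -
  have ma: "m \<in> Arr C" using M_arr assms by blast
  have P: "cd m \<in> Obj C" "R (cd m) \<in> A" using dom_cod_obj ma R_in_A by auto
  define k0 where "k0 = image C F N (Rmor C R \<rho> m) (Id C (R (dm m)))"
  note k0 = least_sub_N_parts[OF least_sub_rho_comp[OF ma, folded k0_def]]
  have "cd k0 = R (cd m)" using k0(3) ma P by simp
  note ck0 = closure_N[OF P(2) k0(1) this]
  obtain P1 t1 where "pb (\<rho> (cd m)) (c (R (cd m)) k0) P1 (c_lift (cd m) m) t1"
    using preimage_is_pullback[OF fcX, of "\<rho> (cd m)" "c (R (cd m)) k0"] P ck0 N_arrs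
    unfolding lift_closure_def k0_def by auto
  then show "c_lift (cd m) m \<in> Arr C" "cd (c_lift (cd m) m) = cd m"
    using pullback_parts(5,7) P by auto
qed

lemma closure_least_sub_iso_comp:
  assumes h: "least_sub N h k0" "h \<in> Arr C" and i: "is_iso C i" "dm i = cd h" "cd i \<in> A"
    and k: "least_sub N (i \<cdot> h) k"
  shows "c (cd i) k \<simeq> i \<cdot> c (cd h) k0"
proof -
  note k0 = least_sub_N_parts[OF h(1)] and kN = least_sub_N_parts[OF k]
  have ia: "i \<in> Arr C" using iso_arr i(1) by blast
  have "k \<simeq> i \<cdot> k0" using least_sub_unique[OF k least_sub_iso_comp[OF h i]] .
  moreover have kc: "cd k = cd i" using kN(3) ia h(2) i(2) by simp
  moreover have ik0: "i \<cdot> k0 \<in> N" "cd (i \<cdot> k0) = cd i" using iso_comp_N[OF k0(1) i(1)] ia k0 i by auto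
  ultimately have c1: "c (cd i) k \<simeq> c (cd i) (i \<cdot> k0)" using closure_sub_eq[OF i(3) kN(1)] by blast
  have c2: "c (cd i) (i \<cdot> k0) \<simeq> i \<cdot> c (cd h) k0"
    using closure_iso_comp[OF i(1,2) refl k0(5) i(3) k0(1,3)] .
  have "c (cd i) k \<in> Arr C" "c (cd i) (i \<cdot> k0) \<in> Arr C" "i \<cdot> c (cd h) k0 \<in> Arr C"
    using closure_N[OF i(3) kN(1) kc] closure_N[OF i(3) ik0] closure_N[OF k0(5,1,3)] N_arrs ia i(2) by auto
  then show ?thesis using sub_eq_trans[OF c1 c2] by blast
qed

lemma lift_closure_pullback:
  assumes u: "is_reflection_arrow C A u" "dm u = P" and m: "m \<in> M" "cd m = P"
    and k: "least_sub N (u \<cdot> m) k" and pb: "pb u (c (cd u) k) P' l t"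
  shows "c_lift P m \<simeq> l"
proof -
  have ua: "u \<in> Arr C" "cd u \<in> A" using reflection_arrow_parts u by auto
  have P: "P \<in> Obj C" "R P \<in> A" using dom_cod_obj ua u R_in_A by auto
  have ma: "m \<in> Arr C" using M_arr m by blast
  define k0 where "k0 = image C F N (Rmor C R \<rho> m) (Id C (R (dm m)))"
  have L0: "least_sub N (\<rho> P \<cdot> m) k0" using least_sub_rho_comp[OF ma] m unfolding k0_def by simp
  note k0 = least_sub_N_parts[OF L0]
  have k0c: "cd k0 = R P" using k0(3) ma m P by simp
  obtain i where i: "is_iso C i" "i \<in> Arr C" "dm i = R P" "cd i = cd u" "i \<cdot> \<rho> P = u"
    using reflection_arrows_iso[OF u(1) rho_reflection[OF P(1)]] u P by auto
  have "i \<cdot> (\<rho> P \<cdot> m) = u \<cdot> m" using comp_assoc_sym[of m "\<rho> P" i] i ma m P by simp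
  then have "least_sub N (i \<cdot> (\<rho> P \<cdot> m)) k" using k by simp
  then have cc: "c (cd u) k \<simeq> i \<cdot> c (R P) k0"
    using closure_least_sub_iso_comp[OF L0 _ i(1)] ma m P i ua by simp
  note ck0 = closure_N[OF P(2) k0(1) k0c]
  have arrs: "c (R P) k0 \<in> Arr C" "i \<cdot> c (R P) k0 \<in> Arr C" "cd (i \<cdot> c (R P) k0) = cd u"
    using ck0 N_arrs i by auto
  obtain P1 t1 where pb1: "pb (\<rho> P) (c (R P) k0) P1 (preimage C (Obj C) (\<rho> P) (c (R P) k0)) t1"
    using preimage_is_pullback[OF fcX, of "\<rho> P" "c (R P) k0"] P ck0 arrs by auto
  obtain P2 l2 t2 where pb2: "pb u (i \<cdot> c (R P) k0) P2 l2 t2"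
    using pullback_exists[OF fcX ua(1) arrs(2)] arrs by auto
  have s1: "preimage C (Obj C) (\<rho> P) (c (R P) k0) \<simeq> l2"
    using pullback_iso_comp[OF pb1 _ i(1)] pb2 i P by simp
  have s2: "l2 \<simeq> l" using pullback_sub_eq[OF pb2 pb sub_eq_sym[OF cc]] .
  have "c_lift P m = preimage C (Obj C) (\<rho> P) (c (R P) k0)"
    unfolding lift_closure_def k0_def using m by simp
  then show ?thesis
    using sub_eq_trans[OF s1 s2 pullback_parts(5)[OF pb1] pullback_parts(5)[OF pb2] pullback_parts(5)[OF pb]]
    by simp
qed

lemma lift_closure_pullback_exists:
  assumes u: "is_reflection_arrow C A u" "dm u = P" and m: "m \<in> M" "cd m = P"
    and k: "least_sub N (u \<cdot> m) k"
  obtains P' l t where "pb u (c (cd u) k) P' l t" "c_lift P m \<simeq> l" "c (cd u) k \<in> N"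
proof -
  have ua: "u \<in> Arr C" "cd u \<in> A" using reflection_arrow_parts u by auto
  note kN = least_sub_N_parts[OF k]
  have "cd k = cd u" using kN M_arr m u ua by simp
  note ck = closure_N[OF ua(2) kN(1) this]
  then obtain P' l t where "pb u (c (cd u) k) P' l t" using pullback_exists[OF fcX ua(1)] N_arrs by metis
  then show ?thesis using that lift_closure_pullback[OF u m k] ck(1) by blast
qed

lemma least_sub_lift_closure:
  assumes u: "is_reflection_arrow C A u" "dm u = P" and m: "m \<in> M" "cd m = P"
    and k: "least_sub N (u \<cdot> m) k"
  shows "least_sub N (u \<cdot> c_lift P m) (c (cd u) k)"
proof -
  have ua: "u \<in> Arr C" "u \<in> E" using reflection_arrow_parts u reflection_arrow_in_E by auto
  obtain P' l t where pb: "pb u (c (cd u) k) P' l t" and lift: "c_lift P m \<simeq> l" and ck: "c (cd u) k \<in> N"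
    by (rule lift_closure_pullback_exists[OF u m k])
  note pp = pullback_parts[OF pb]
  have lift_arr: "c_lift P m \<in> Arr C" "cd (c_lift P m) = dm u"
    using lift sub_le_arr[OF _ pp(5)] pp(7) unfolding sub_eq_iff by auto
  have "u \<cdot> l \<simeq> u \<cdot> c_lift P m" using sub_eq_sym[OF sub_eq_comp_left[OF lift ua(1) pp(5,7)]] .
  moreover have "least_sub N (u \<cdot> l) (c (cd u) k)" using least_sub_pullback[OF ua(2) ck pb] .
  ultimately show ?thesis
    using least_sub_cong[OF _ _ _ _ N_sub_Arr] ua(1) pp(5,7) lift_arr by simp
qed

end

locale reflection_square = lifted_closure +
  fixes f u v g P Y Q B
  assumes f: "f \<in> Arr C" "dm f = P" "cd f = Y"
    and u: "is_reflection_arrow C A u" "dm u = P" "cd u = Q"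
    and v: "is_reflection_arrow C A v" "dm v = Y" "cd v = B"
    and g: "g \<in> Arr C" "dm g = Q" "cd g = B"
    and square: "g \<cdot> u = v \<cdot> f"
begin

lemma u_parts: "u \<in> Arr C" "Q \<in> A" "u \<in> E"
  using reflection_arrow_parts[OF u(1)] u reflection_arrow_in_E by auto

lemma v_parts: "v \<in> Arr C" "B \<in> A" "v \<in> E"
  using reflection_arrow_parts[OF v(1)] v reflection_arrow_in_E by auto

lemma least_sub_square_image:
  assumes "x \<in> Arr C" "cd x = P" "least_sub N (u \<cdot> x) K"
  shows "least_sub N (v \<cdot> image C E M f x) (image C F N g K)"
proof -
  let ?a = "image C E M f x"
  obtain e where e: "?a \<in> M" "cd ?a = Y" "e \<in> E" "cd e = dm ?a" "f \<cdot> x = ?a \<cdot> e"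
    using image_EM[OF f(1) assms(1)] assms(2) f by metis
  have a: "?a \<in> Arr C" "e \<in> Arr C" using e M_arr E_arr by auto
  have "g \<cdot> (u \<cdot> x) = v \<cdot> (f \<cdot> x)" by (rule comp_eq_extend[OF square]) (use g u_parts v_parts f assms(1,2) u v in simp_all)
  also have "\<dots> = (v \<cdot> ?a) \<cdot> e" using e(5) a e(2,4) v_parts v by simp
  finally have eq: "g \<cdot> (u \<cdot> x) = (v \<cdot> ?a) \<cdot> e" .
  have "least_sub N (g \<cdot> (u \<cdot> x)) (image C F N g K)"
    by (rule least_sub_image_comp[OF assms(3)]) (use g u_parts v_parts assms u in simp_all)
  then have "least_sub N ((v \<cdot> ?a) \<cdot> e) (image C F N g K)" unfolding eq .
  then show ?thesis by (rule least_sub_cancel_E[OF _ e(3)]) (use a e(2,4) v_parts v in simp_all)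
qed

lemma preserving_lift_imp_preserving:
  assumes pres: "preserving C E M c_lift f"
  shows "preserving C F N c g"
  unfolding preserving_def
proof
  fix k assume "k \<in> sub C N (dm g)"
  then have k: "k \<in> N" "cd k = Q" using g unfolding sub_def by auto
  have "k \<in> Arr C" using N_arrs k by blast
  then have "\<exists>P' l t. pb u k P' l t" using pullback_exists[OF fcX u_parts(1)] k u by simp
  then obtain P' l t where pb: "pb u k P' l t" by blast
  note pp = pullback_parts[OF pb]
  have l: "l \<in> M" "cd l = P" using pullback_M[OF pb] N_sub_M k pp u by auto
  have Ll: "least_sub N (u \<cdot> l) k" using least_sub_pullback[OF u_parts(3) k(1) pb] .
  let ?n = "image C E M f l"
  have Ln: "least_sub N (v \<cdot> ?n) (image C F N g k)" using least_sub_square_image[OF pp(5) l(2) Ll] .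
  have n: "?n \<in> M" "cd ?n = Y" using image_EM[OF f(1) pp(5)] l f by metis+
  have L2: "least_sub N (v \<cdot> c_lift Y ?n) (c B (image C F N g k))"
    using least_sub_lift_closure[OF v(1,2) n Ln] v by simp
  note cl = lift_closure_arr[OF l(1)]
  have L3: "least_sub N (u \<cdot> c_lift P l) (c Q k)" using least_sub_lift_closure[OF u(1,2) l Ll] u by simp
  have L4: "least_sub N (v \<cdot> image C E M f (c_lift P l)) (image C F N g (c Q k))"
    using least_sub_square_image[OF _ _ L3] cl l by simp
  note cn = lift_closure_arr[OF n(1)]
  have fcl: "image C E M f (c_lift P l) \<in> M" "cd (image C E M f (c_lift P l)) = Y"
    using image_EM[OF f(1) cl(1)] cl l f by metis+
  have "image C E M f (c_lift P l) \<simeq> c_lift Y ?n" using pres l f unfolding preserving_def sub_def by auto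
  then have "v \<cdot> image C E M f (c_lift P l) \<simeq> v \<cdot> c_lift Y ?n"
    using sub_eq_comp_left[OF _ v_parts(1) cn(1)] cn(2) n(2) v by simp
  then have "least_sub N (v \<cdot> c_lift Y ?n) (image C F N g (c Q k))"
    by (rule least_sub_cong[OF L4 _ _ _ N_sub_Arr]) (use fcl M_arr v_parts cn n v in simp_all)
  then show "image C F N g (c (dm g) k) \<simeq> c (cd g) (image C F N g k)"
    using least_sub_unique[OF _ L2] g by simp
qed

lemma preserving_imp_preserving_lift:
  assumes pres: "preserving C F N c g"
    and beck_chevalley: "\<And>k P1 l1 t1 P2 w t2. k \<in> N \<Longrightarrow> cd k = Q \<Longrightarrow> pb u k P1 l1 t1 \<Longrightarrow>
       pb v (image C F N g k) P2 w t2 \<Longrightarrow> image C E M f l1 \<simeq> w"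
  shows "preserving C E M c_lift f"
  unfolding preserving_def
proof
  fix m assume "m \<in> sub C M (dm f)"
  then have m: "m \<in> M" "cd m = P" "m \<in> Arr C" using f M_arr unfolding sub_def by auto
  have "u \<cdot> m \<in> Arr C" "cd (u \<cdot> m) \<in> A" using m u_parts u by auto
  then obtain k where Lk: "least_sub N (u \<cdot> m) k" using least_sub_N_exists by blast
  have kc: "cd k = Q" using least_sub_N_parts(3)[OF Lk] m u_parts u by simp
  obtain P1 l1 t1 where pb1: "pb u (c Q k) P1 l1 t1" and lift1: "c_lift P m \<simeq> l1" and ck: "c Q k \<in> N"
    using lift_closure_pullback_exists[OF u(1,2) m(1,2) Lk] u(3) by metis
  note p1 = pullback_parts[OF pb1]
  have s1: "image C E M f (c_lift P m) \<simeq> image C E M f l1"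
    using image_EM_sub_eq[OF f(1) lift1 p1(5)] p1 u f by simp
  let ?I = "image C F N g (c Q k)"
  have "c Q k \<in> Arr C" "cd (c Q k) = Q" using closure_N[OF u_parts(2) least_sub_N_parts(1)[OF Lk] kc] N_arrs by auto
  then have I: "?I \<in> Arr C" "cd ?I = B" using image_FN[OF g(1)] ck g v_parts N_arrs by metis+
  obtain P2 w t2 where pb2: "pb v ?I P2 w t2" using pullback_exists[OF fcX v_parts(1) I(1)] I v by auto
  have s2: "image C E M f l1 \<simeq> w" using beck_chevalley[OF ck \<open>cd (c Q k) = Q\<close> pb1 pb2] .
  let ?n = "image C E M f m"
  have n: "?n \<in> M" "cd ?n = Y" using image_EM[OF f(1) m(3)] m f by metis+
  have Ln: "least_sub N (v \<cdot> ?n) (image C F N g k)" using least_sub_square_image[OF m(3,2) Lk] .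
  obtain P3 lb tb where pb3: "pb v (c B (image C F N g k)) P3 lb tb" and lift2: "c_lift Y ?n \<simeq> lb"
    using lift_closure_pullback_exists[OF v(1,2) n Ln] v(3) by metis
  have "?I \<simeq> c B (image C F N g k)"
    using pres least_sub_N_parts(1)[OF Lk] kc g unfolding preserving_def sub_def by auto
  then have s3: "w \<simeq> lb" using pullback_sub_eq[OF pb2 pb3] by blast
  have a: "image C E M f (c_lift P m) \<in> Arr C" "image C E M f l1 \<in> Arr C"
    "w \<in> Arr C" "lb \<in> Arr C" "c_lift Y ?n \<in> Arr C"
    using image_EM[OF f(1)] lift_closure_arr[OF m(1)] lift_closure_arr[OF n(1)] p1 pb2 pb3
      pullback_parts(5) u f m n M_arr by metis+
  have "image C E M f (c_lift P m) \<simeq> c_lift Y ?n"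
    using sub_eq_trans[OF sub_eq_trans[OF sub_eq_trans[OF s1 s2 a(1-3)] s3 a(1,3,4)] sub_eq_sym[OF lift2]
      a(1,4,5)] .
  then show "image C E M f (c_lift (dm f) m) \<simeq> c_lift (cd f) (image C E M f m)" using f by simp
qed

end

section \<open>Compactness\<close>

context lifted_closure
begin

lemma compact_lift_imp_compact:
  assumes X: "X \<in> Obj C" and prod: "preserves_products_with C A R \<rho> X"
    and compact_X: "compact C (Obj C) E M c_lift X"
  shows "compact C A F N c (R X)"
  unfolding compact_def
proof (intro ballI allI impI)
  fix B Q q1 q2 assume B: "B \<in> A" and QQ: "is_product C A (R X) B Q q1 q2"
  have BO: "B \<in> Obj C" using A_sub_Obj B by blast
  obtain P p1 p2 where PP: "is_product C (Obj C) X B P p1 p2"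
    using product_exists[OF fcX X BO] by blast
  have pres: "preserving C E M c_lift p2" using compact_X BO PP unfolding compact_def by blast
  note pp = product_parts[OF PP] and qq = product_parts[OF QQ]
  obtain u where lift: "u \<in> Arr C" "dm u = P" "cd u = Q" "q1 \<cdot> u = \<rho> X \<cdot> p1" "q2 \<cdot> u = p2"
    by (rule product_lift[OF product_in_A_is_product[OF QQ], where a = "\<rho> X \<cdot> p1" and b = p2])
      (use pp X in simp_all)
  \<comment> \<open>With second projection \<open>\<rho> B \<cdot> q2\<close>, \<open>Q\<close> is a product \<open>R X \<times> R B\<close>, so \<open>u\<close> is a reflection arrow.\<close>
  have "is_product C A (R X) (R B) Q q1 (\<rho> B \<cdot> q2)"
    using product_comp_iso[OF QQ rho_iso_on_A[OF B]] BO R_in_A by simp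
  moreover have "(\<rho> B \<cdot> q2) \<cdot> u = \<rho> B \<cdot> p2" using lift qq BO by simp
  ultimately have "is_reflection_arrow C A u"
    using prod BO PP lift unfolding preserves_products_with_def hom_iff by blast
  then interpret reflection_square C A R \<rho> E M F N c p2 u "Id C B" q2 P B Q B
    by unfold_locales (use pp qq lift Id_reflection_arrow[OF B] BO in simp_all)
  show "preserving C F N c q2" using preserving_lift_imp_preserving[OF pres] .
qed

lemma compact_imp_compact_lift:
  assumes X: "X \<in> Obj C" and prod: "preserves_products_with C A R \<rho> X"
    and fcA: "finitely_complete C A" and compact_RX: "compact C A F N c (R X)"
  shows "compact C (Obj C) E M c_lift X"
  unfolding compact_def
proof (intro ballI allI impI)
  fix Y P p1 p2 assume Y: "Y \<in> Obj C" and PP: "is_product C (Obj C) X Y P p1 p2"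
  obtain Q q1 q2 where QQ: "is_product C A (R X) (R Y) Q q1 q2"
    using product_exists[OF fcA R_in_A[OF X] R_in_A[OF Y]] by blast
  have pres: "preserving C F N c q2" using compact_RX R_in_A[OF Y] QQ unfolding compact_def by blast
  note pp = product_parts[OF PP] and qq = product_parts[OF QQ]
  obtain u where lift: "u \<in> Arr C" "dm u = P" "cd u = Q" "q1 \<cdot> u = \<rho> X \<cdot> p1" "q2 \<cdot> u = \<rho> Y \<cdot> p2"
    by (rule product_lift[OF product_in_A_is_product[OF QQ], where a = "\<rho> X \<cdot> p1" and b = "\<rho> Y \<cdot> p2"])
      (use pp X Y in simp_all)
  have "is_reflection_arrow C A u"
    using prod Y PP QQ lift unfolding preserves_products_with_def hom_iff by blast
  then interpret reflection_square C A R \<rho> E M F N c p2 u "\<rho> Y" q2 P Y Q "R Y"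
    by unfold_locales (use pp qq lift rho_reflection[OF Y] Y in simp_all)
  show "preserving C E M c_lift p2"
    by (rule preserving_imp_preserving_lift[OF pres beck_chevalley_product[OF X PP QQ _ _ _ lift]])
      (use Y in simp_all)
qed

end

theorem corollary2p10:
  fixes C :: "('o,'m) cat" and A :: "'o set"
    and E M F N :: "'m set"
    and R :: "'o \<Rightarrow> 'o" and \<rho> :: "'o \<Rightarrow> 'm"
    and c :: "'o \<Rightarrow> 'm \<Rightarrow> 'm" and X :: 'o
  assumes cat: "is_category C"
    and fcX: "finitely_complete C (Obj C)"
    and fcA: "finitely_complete C A"
    and EM: "proper_factorization_system C (Obj C) E M"
    and FN: "proper_factorization_system C A F N"
    and refl: "reflective C A R \<rho>"
    and NM: "N \<subseteq> M"
    and RE: "\<forall>e\<in>E. Rmor C R \<rho> e \<in> F"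
    and Estable: "pullback_stable C (Obj C) E"
    and Neq: "N = {m \<in> M. Dom C m \<in> A \<and> Cod C m \<in> A}"
    and Erefl: "\<forall>Y\<in>Obj C. \<rho> Y \<in> E"
    and clo: "closure_op C A F N c"
    and X: "X \<in> Obj C"
    and prod: "preserves_products_with C A R \<rho> X"
  shows "compact C (Obj C) E M (lift_closure C A F N R \<rho> c) X \<longleftrightarrow> compact C A F N c (R X)"
proof -
  interpret lifted_closure C A R \<rho> E M F N c
    by unfold_locales (use cat fcX EM FN refl Estable Neq Erefl clo in auto)
  show ?thesis using compact_lift_imp_compact[OF X prod] compact_imp_compact_lift[OF X prod fcA] by blast
qed

end
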